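(* Let $n\ge 1$, let $\lambda_0\in\mathbb{C}$, and let $\lambda_1^{\mathcal{C}},\dots,\lambda_n^{\mathcal{C}},\lambda_1^{\mathcal{B}},\dots,\lambda_n^{\mathcal{B}}\in\mathbb{C}$. Put $X=\{\lambda_1^{\mathcal{C}},\dots,\lambda_n^{\mathcal{C}}\}$, $Y=\{\lambda_1^{\mathcal{B}},\dots,\lambda_n^{\mathcal{B}}\}$, $X_\lambda=X\setminus\{\lambda\}$, $Y_\lambda=Y\setminus\{\lambda\}$. For $\lambda=\lambda_k^{\mathcal{C}}\in X$, let $\vec X^{0,n}_\lambda$ be the $n$-tuple obtained from $(\lambda_0,\lambda_1^{\mathcal{C}},\dots,\lambda_n^{\mathcal{C}})$ by deleting $\lambda_k^{\mathcal{C}}$; for $\lambda=\lambda_k^{\mathcal{B}}\in Y$, let $\vec Y^{0,n}_\lambda$ be obtained from $(\lambda_0,\lambda_1^{\mathcal{B}},\dots,\lambda_n^{\mathcal{B}})$ by deleting $\lambda_k^{\mathcal{B}}$. Define $$\widetilde M_0=\Lambda_{\tilde{\mathcal{D}}}(\lambda_0)\Big\{\prod_{\lambda\in Y}\frac{a(\lambda_0-\lambda)}{b(\lambda_0-\lambda)}\frac{a(\lambda_0+\lambda+\gamma)}{b(\lambda_0+\lambda+\gamma)}-\prod_{\lambda\in X}\frac{a(\lambda_0-\lambda)}{b(\lambda_0-\lambda)}\frac{a(\lambda_0+\lambda+\gamma)}{b(\lambda_0+\lambda+\gamma)}\Big\},$$ $$\widetilde N^{(\mathcal{C})}_\lambda=-\Lambda_{\mathcal{A}}(\lambda)\frac{c}{a(2\lambda_0)}\frac{b(2\lambda)}{a(2\lambda)}\frac{a(2\lambda_0+\gamma)}{a(\lambda_0+\lambda)}\prod_{\tilde\lambda\in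 X_\lambda}\frac{a(\tilde\lambda-\lambda)}{b(\tilde\lambda-\lambda)}\frac{b(\tilde\lambda+\lambda)}{a(\tilde\lambda+\lambda)}+\Lambda_{\tilde{\mathcal{D}}}(\lambda)\frac{a(2\lambda_0+\gamma)}{b(2\lambda_0+\gamma)}\frac{c}{b(\lambda_0-\lambda)}\prod_{\tilde\lambda\in X_\lambda}\frac{a(\lambda-\tilde\lambda)}{b(\lambda-\tilde\lambda)}\frac{a(\lambda+\tilde\lambda+\gamma)}{b(\lambda+\tilde\lambda+\gamma)}$$ for $\lambda\in X$, and $$\widetilde N^{(\mathcal{B})}_\lambda=\Lambda_{\mathcal{A}}(\lambda)\frac{c}{a(2\lambda_0)}\frac{b(2\lambda)}{a(2\lambda)}\frac{a(2\lambda_0+\gamma)}{a(\lambda_0+\lambda)}\prod_{\tilde\lambda\in Y_\lambda}\frac{a(\tilde\lambda-\lambda)}{b(\tilde\lambda-\lambda)}\frac{b(\tilde\lambda+\lambda)}{a(\tilde\lambda+\lambda)}-\Lambda_{\tilde{\mathcal{D}}}(\lambda)\frac{a(2\lambda_0+\gamma)}{b(2\lambda_0+\gamma)}\frac{c}{b(\lambda_0-\lambda)}\prod_{\tilde\lambda\in Y_\lambda}\frac{a(\lambda-\tilde\lambda)}{b(\lambda-\tilde\lambda)}\frac{a(\lambda+\tilde\lambda+\gamma)}{b(\lambda+\tilde\lambda+\gamma)}$$ for $\lambda\in Y$. Then $$\widetilde M_0\,\mathcal{S}_n(\lambda_1^{\mathcal{C}},\dots,\lambda_n^{\mathcal{C}}\,|\,\lambda_1^{\mathcal{B}},\dots,\lambda_n^{\mathcal{B}})+\sum_{\lambda\in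 X}\widetilde N^{(\mathcal{C})}_\lambda\,\mathcal{S}_n(\vec X^{0,n}_\lambda\,|\,\lambda_1^{\mathcal{B}},\dots,\lambda_n^{\mathcal{B}})+\sum_{\lambda\in Y}\widetilde N^{(\mathcal{B})}_\lambda\,\mathcal{S}_n(\lambda_1^{\mathcal{C}},\dots,\lambda_n^{\mathcal{C}}\,|\,\vec Y^{0,n}_\lambda)=0.$$
   Context: Fix generic $\gamma,h\in\mathbb{C}$, an integer $L\ge1$ and inhomogeneities $\mu_1,\dots,\mu_L\in\mathbb{C}$. Set $a(\lambda)=\sinh(\lambda+\gamma)$, $b(\lambda)=\sinh(\lambda)$, $c=\sinh(\gamma)$ (a constant). Let $\mathcal{R}(\lambda)\in\mathrm{End}(\mathbb{C}^2\otimes\mathbb{C}^2)$ be the six-vertex R-matrix, which in the basis $e_1\otimes e_1,e_1\otimes e_2,e_2\otimes e_1,e_2\otimes e_2$ is $\begin{pmatrix}a(\lambda)&0&0&0\\0&b(\lambda)&c&0\\0&c&b(\lambda)&0\\0&0&0&a(\lambda)\end{pmatrix}$, and let $\mathcal{K}(\lambda)=\mathrm{diag}(\sinh(h+\lambda),\sinh(h-\lambda))$. With auxiliary space $V_0\cong\mathbb{C}^2$ and quantum space $V_{\mathcal{Q}}=(\mathbb{C}^2)^{\otimes L}$, $\mathcal{R}_{0j}$ is $\mathcal{R}$ acting on $V_0\otimes V_j$ and $\mathcal{K}_0$ is $\mathcal{K}$ on $V_0$. Define $\mathcal{A},\mathcal{B},\mathcal{C},\mathcal{D}(\lambda)\in\mathrm{End}(V_{\mathcal{Q}})$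 by $\mathcal{R}_{0L}(\lambda-\mu_L)\cdots\mathcal{R}_{01}(\lambda-\mu_1)\mathcal{K}_0(\lambda)\mathcal{R}_{01}(\lambda+\mu_1)\cdots\mathcal{R}_{0L}(\lambda+\mu_L)=\begin{pmatrix}\mathcal{A}(\lambda)&\mathcal{B}(\lambda)\\\mathcal{C}(\lambda)&\mathcal{D}(\lambda)\end{pmatrix}$ on $V_0$. Let $|0\rangle=(1,0)^{T\otimes L}$, $\langle0|=(1,0)^{\otimes L}$. The scalar product is $\mathcal{S}_n(\lambda_1^{\mathcal{C}},\dots,\lambda_n^{\mathcal{C}}|\lambda_1^{\mathcal{B}},\dots,\lambda_n^{\mathcal{B}})=\langle0|\mathcal{C}(\lambda_n^{\mathcal{C}})\cdots\mathcal{C}(\lambda_1^{\mathcal{C}})\mathcal{B}(\lambda_1^{\mathcal{B}})\cdots\mathcal{B}(\lambda_n^{\mathcal{B}})|0\rangle$. Also $\Lambda_{\mathcal{A}}(\lambda)=b(h+\lambda)\prod_{j=1}^L a(\lambda-\mu_j)a(\lambda+\mu_j)$ and $\Lambda_{\tilde{\mathcal{D}}}(\lambda)=-\frac{b(2\lambda)}{a(2\lambda)}a(\lambda-h)\prod_{j=1}^L b(\lambda-\mu_j)b(\lambda+\mu_j)$. The identity is understood as an identity of meromorphic functions of all variables. *)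

theory Defs
  imports Complex_Main
begin

(* Weights of the trigonometric six-vertex model *)
definition fa :: "complex \<Rightarrow> complex \<Rightarrow> complex" where
  "fa \<gamma> x = sinh (x + \<gamma>)"
definition fb :: "complex \<Rightarrow> complex" where
  "fb x = sinh x"

(* Basis of C^2: index 0 = e_1, index 1 = e_2.
   Rmat g x i j k l = entry of R(x) in row e_i (x) e_j, column e_k (x) e_l. *)
definition Rmat :: "complex \<Rightarrow> complex \<Rightarrow> nat \<Rightarrow> nat \<Rightarrow> nat \<Rightarrow> nat \<Rightarrow> complex" where
  "Rmat \<gamma> x i j k l =
     (if i = j \<and> k = l \<and> i = k then fa \<gamma> x
      else if i \<noteq> j \<and> k = i \<and> l = j then fb x
      else if i \<noteq> j \<and> k = j \<and> l = i then sinh \<gamma>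
      else 0)"

(* Vectors of V_Q = (C^2)^{(x)L}: functions on basis states (lists over {0,1} of length L).
   Vectors of V_0 (x) V_Q: functions of the auxiliary index and the quantum state. *)
type_synonym qvec = "nat list \<Rightarrow> complex"
type_synonym avec = "nat \<Rightarrow> nat list \<Rightarrow> complex"

(* R_{0,p+1}(x) acting on V_0 (x) V_Q; the quantum site p+1 is list position p *)
definition Rop :: "complex \<Rightarrow> complex \<Rightarrow> nat \<Rightarrow> avec \<Rightarrow> avec" where
  "Rop \<gamma> x p v = (\<lambda>s0 s. \<Sum>t0\<in>{0,1::nat}. \<Sum>t\<in>{0,1::nat}.
       Rmat \<gamma> x s0 (s ! p) t0 t * v t0 (s[p := t]))"

definition Kop :: "complex \<Rightarrow> complex \<Rightarrow> avec \<Rightarrow> avec" where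
  "Kop h x v = (\<lambda>s0 s. (if s0 = 0 then sinh (h + x) else sinh (h - x)) * v s0 s)"

(* R_{0L}(x-mu_L) ... R_{01}(x-mu_1) K_0(x) R_{01}(x+mu_1) ... R_{0L}(x+mu_L),
   with mu = [mu_1, ..., mu_L] *)
definition DRop :: "complex \<Rightarrow> complex \<Rightarrow> complex list \<Rightarrow> complex \<Rightarrow> avec \<Rightarrow> avec" where
  "DRop \<gamma> h mu x v =
     fold (\<lambda>p w. Rop \<gamma> (x - mu ! p) p w) [0..<length mu]
       (Kop h x (fold (\<lambda>p w. Rop \<gamma> (x + mu ! p) p w) (rev [0..<length mu]) v))"

(* entry (i,j) of the double-row monodromy matrix, as an operator on V_Q *)
definition Top :: "complex \<Rightarrow> complex \<Rightarrow> complex list \<Rightarrow> nat \<Rightarrow> nat \<Rightarrow> complex \<Rightarrow> qvec \<Rightarrow> qvec" where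
  "Top \<gamma> h mu i j x w = (\<lambda>s. DRop \<gamma> h mu x (\<lambda>t0 t. if t0 = j then w t else 0) i s)"

definition Aop where "Aop \<gamma> h mu = Top \<gamma> h mu 0 0"
definition Bop where "Bop \<gamma> h mu = Top \<gamma> h mu 0 1"
definition Cop where "Cop \<gamma> h mu = Top \<gamma> h mu 1 0"
definition Dop where "Dop \<gamma> h mu = Top \<gamma> h mu 1 1"

definition vac :: "nat \<Rightarrow> qvec" where
  "vac L = (\<lambda>s. if s = replicate L 0 then 1 else 0)"

(* S_n(xs | ys) = <0| C(x_n) ... C(x_1) B(y_1) ... B(y_n) |0> *)
definition Sn :: "complex \<Rightarrow> complex \<Rightarrow> complex list \<Rightarrow> complex list \<Rightarrow> complex list \<Rightarrow> complex" where
  "Sn \<gamma> h mu xs ys =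
     fold (\<lambda>x w. Cop \<gamma> h mu x w) xs
       (foldr (\<lambda>y w. Bop \<gamma> h mu y w) ys (vac (length mu))) (replicate (length mu) 0)"

definition LambdaA :: "complex \<Rightarrow> complex \<Rightarrow> complex list \<Rightarrow> complex \<Rightarrow> complex" where
  "LambdaA \<gamma> h mu x = fb (h + x) * (\<Prod>j<length mu. fa \<gamma> (x - mu ! j) * fa \<gamma> (x + mu ! j))"

definition LambdaDt :: "complex \<Rightarrow> complex \<Rightarrow> complex list \<Rightarrow> complex \<Rightarrow> complex" where
  "LambdaDt \<gamma> h mu x = - (fb (2 * x) / fa \<gamma> (2 * x)) * fa \<gamma> (x - h) *
      (\<Prod>j<length mu. fb (x - mu ! j) * fb (x + mu ! j))"

(* delete the k-th entry (0-based) *)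
definition del_at :: "nat \<Rightarrow> 'a list \<Rightarrow> 'a list" where
  "del_at k xs = take k xs @ drop (Suc k) xs"

definition M0 :: "complex \<Rightarrow> complex \<Rightarrow> complex list \<Rightarrow> complex \<Rightarrow> complex list \<Rightarrow> complex list \<Rightarrow> complex" where
  "M0 \<gamma> h mu l0 xs ys = LambdaDt \<gamma> h mu l0 *
     ((\<Prod>k<length ys. fa \<gamma> (l0 - ys ! k) / fb (l0 - ys ! k) *
                       (fa \<gamma> (l0 + ys ! k + \<gamma>) / fb (l0 + ys ! k + \<gamma>)))
    - (\<Prod>k<length xs. fa \<gamma> (l0 - xs ! k) / fb (l0 - xs ! k) *
                       (fa \<gamma> (l0 + xs ! k + \<gamma>) / fb (l0 + xs ! k + \<gamma>))))"

definition NC :: "complex \<Rightarrow> complex \<Rightarrow> complex list \<Rightarrow> complex \<Rightarrow> complex list \<Rightarrow> nat \<Rightarrow> complex" where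
  "NC \<gamma> h mu l0 xs k = (let x = xs ! k in
     - LambdaA \<gamma> h mu x * (sinh \<gamma> / fa \<gamma> (2 * l0)) * (fb (2 * x) / fa \<gamma> (2 * x)) *
       (fa \<gamma> (2 * l0 + \<gamma>) / fa \<gamma> (l0 + x)) *
       (\<Prod>j\<in>{..<length xs} - {k}. fa \<gamma> (xs ! j - x) / fb (xs ! j - x) *
                                    (fb (xs ! j + x) / fa \<gamma> (xs ! j + x)))
     + LambdaDt \<gamma> h mu x * (fa \<gamma> (2 * l0 + \<gamma>) / fb (2 * l0 + \<gamma>)) * (sinh \<gamma> / fb (l0 - x)) *
       (\<Prod>j\<in>{..<length xs} - {k}. fa \<gamma> (x - xs ! j) / fb (x - xs ! j) *
                                    (fa \<gamma> (x + xs ! j + \<gamma>) / fb (x + xs ! j + \<gamma>))))"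

definition NB :: "complex \<Rightarrow> complex \<Rightarrow> complex list \<Rightarrow> complex \<Rightarrow> complex list \<Rightarrow> nat \<Rightarrow> complex" where
  "NB \<gamma> h mu l0 ys k = (let y = ys ! k in
     LambdaA \<gamma> h mu y * (sinh \<gamma> / fa \<gamma> (2 * l0)) * (fb (2 * y) / fa \<gamma> (2 * y)) *
       (fa \<gamma> (2 * l0 + \<gamma>) / fa \<gamma> (l0 + y)) *
       (\<Prod>j\<in>{..<length ys} - {k}. fa \<gamma> (ys ! j - y) / fb (ys ! j - y) *
                                    (fb (ys ! j + y) / fa \<gamma> (ys ! j + y)))
     - LambdaDt \<gamma> h mu y * (fa \<gamma> (2 * l0 + \<gamma>) / fb (2 * l0 + \<gamma>)) * (sinh \<gamma> / fb (l0 - y)) *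
       (\<Prod>j\<in>{..<length ys} - {k}. fa \<gamma> (y - ys ! j) / fb (y - ys ! j) *
                                    (fa \<gamma> (y + ys ! j + \<gamma>) / fb (y + ys ! j + \<gamma>))))"

end

theory Submission
  imports Defs
begin

text \<open>Insert \<open>D\<^sup>~(\<lambda>\<^sub>0) = D(\<lambda>\<^sub>0) - sinh \<gamma> / a(2\<lambda>\<^sub>0) A(\<lambda>\<^sub>0)\<close> between the \<open>C\<close>- and the
  \<open>B\<close>-operators of the scalar product. Moving it to the right through the \<open>B\<close>'s by the exchange
  relations of \<open>A\<close> and \<open>D\<^sup>~\<close> with \<open>B\<close>, and evaluating on the vacuum, gives a multiple of
  \<open>S\<^sub>n\<close> plus one unwanted term for each \<open>\<lambda> \<in> Y\<close>, in which \<open>B(\<lambda>)\<close> is replaced by \<open>B(\<lambda>\<^sub>0)\<close>;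
  moving it to the left through the \<open>C\<close>'s gives the analogous expansion over \<open>X\<close>. The identity is
  the difference of the two expansions. All exchange relations are entries of the reflection
  equation, which follows from the Yang--Baxter equation by induction on the number of sites;
  the extra genericity conditions needed to solve for the relations are removed by continuity.\<close>

section \<open>Hyperbolic identities\<close>

lemma sinh_eq_exp: "sinh (z::complex) = (exp z - inverse (exp z)) / 2"
  by (simp add: sinh_def exp_minus scaleR_conv_of_real)

lemma exp_double: "exp (2 * (z::complex)) = exp z * exp z"
  by (metis exp_add mult_2)

text \<open>Rewriting every \<open>sinh\<close> into exponentials turns the identities between the weights below
  into rational identities in \<open>exp\<close> of the variables, which \<open>field_simps\<close> decides.\<close>

lemmas sinh_exp_simps = sinh_eq_exp exp_add exp_diff exp_minus exp_double

lemma fb_minus: "fb (x - y) = - fb (y - x)"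
  unfolding fb_def by (metis minus_diff_eq sinh_minus)

lemma fb_add_gamma: "fb (x + y + g) = fa g (x + y)"
  by (simp add: fa_def fb_def)

lemma fb_double_add_gamma: "fb (2 * x + g) = fa g (2 * x)"
  by (simp add: fa_def fb_def)

section \<open>Operators on two auxiliary spaces\<close>

text \<open>Vectors of \<open>V\<^sub>a \<otimes> V\<^sub>b \<otimes> V\<^sub>Q\<close>: the first two indices are the states of the auxiliary
  spaces \<open>a\<close> and \<open>b\<close>. Only the states \<open>0\<close> and \<open>1\<close> are meaningful; all operators vanish at
  larger indices, which the entrywise proofs below dispose of first.\<close>

type_synonym avec2 = "nat \<Rightarrow> nat \<Rightarrow> nat list \<Rightarrow> complex"

definition on_a :: "(avec \<Rightarrow> avec) \<Rightarrow> avec2 \<Rightarrow> avec2" where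
  "on_a F v = (\<lambda>a b s. F (\<lambda>c s'. v c b s') a s)"

definition on_b :: "(avec \<Rightarrow> avec) \<Rightarrow> avec2 \<Rightarrow> avec2" where
  "on_b F v = (\<lambda>a b s. F (\<lambda>c s'. v a c s') b s)"

definition Rab :: "complex \<Rightarrow> complex \<Rightarrow> avec2 \<Rightarrow> avec2" where
  "Rab g x v = (\<lambda>a b s. \<Sum>c\<in>{0,1::nat}. \<Sum>d\<in>{0,1::nat}. Rmat g x a b c d * v c d s)"

lemma on_a_comp: "on_a (F \<circ> G) w = on_a F (on_a G w)"
  by (simp add: on_a_def)

lemma on_b_comp: "on_b (F \<circ> G) w = on_b F (on_b G w)"
  by (simp add: on_b_def)

lemma Rmat_out_of_range:
  "k \<le> 1 \<Longrightarrow> l \<le> 1 \<Longrightarrow> i \<ge> 2 \<or> j \<ge> 2 \<Longrightarrow> Rmat g x i j k l = 0"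
  by (auto simp: Rmat_def)

definition eq_on_len :: "nat \<Rightarrow> avec2 \<Rightarrow> avec2 \<Rightarrow> bool" where
  "eq_on_len n v w \<longleftrightarrow> (\<forall>a b s. length s = n \<longrightarrow> v a b s = w a b s)"

lemma eq_on_len_trans [trans]: "eq_on_len n u v \<Longrightarrow> eq_on_len n v w \<Longrightarrow> eq_on_len n u w"
  by (simp add: eq_on_len_def)

lemma eq_on_len_eq_trans [trans]: "eq_on_len n u v \<Longrightarrow> v = w \<Longrightarrow> eq_on_len n u w"
  by simp

lemma eq_eq_on_len_trans [trans]: "u = v \<Longrightarrow> eq_on_len n v w \<Longrightarrow> eq_on_len n u w"
  by simp

lemma yang_baxter_Rab_middle:
  assumes "L < n" "p + q = r"
  shows "eq_on_len n (on_a (Rop g p L) (Rab g r (on_b (Rop g q L) w)))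
                     (on_b (Rop g q L) (Rab g r (on_a (Rop g p L) w)))"
  unfolding eq_on_len_def assms(2)[symmetric]
proof (intro allI impI)
  fix a b :: nat and s :: "nat list" assume "length s = n"
  with assms have L: "L < length s" by simp
  consider "a \<ge> 2 \<or> b \<ge> 2 \<or> s ! L \<ge> 2" | "a \<in> {0,1}" "b \<in> {0,1}" "s ! L \<in> {0,1}"
    by fastforce
  then show "on_a (Rop g p L) (Rab g (p + q) (on_b (Rop g q L) w)) a b s
           = on_b (Rop g q L) (Rab g (p + q) (on_a (Rop g p L) w)) a b s"
  proof cases
    case 1 then show ?thesis
      by (auto simp: on_a_def on_b_def Rab_def Rop_def Rmat_out_of_range)
  next
    case 2 then show ?thesis using L
      apply (simp add: on_a_def on_b_def Rab_def Rop_def)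
      apply (elim disjE)
             apply (simp_all add: Rmat_def fa_def fb_def)
             apply (simp_all only: sinh_exp_simps)
             apply (simp_all add: field_simps)
      done
  qed
qed

lemma yang_baxter_Rab_left:
  assumes "L < n" "p + q = r"
  shows "eq_on_len n (Rab g p (on_a (Rop g r L) (on_b (Rop g q L) w)))
                     (on_b (Rop g q L) (on_a (Rop g r L) (Rab g p w)))"
  unfolding eq_on_len_def assms(2)[symmetric]
proof (intro allI impI)
  fix a b :: nat and s :: "nat list" assume "length s = n"
  with assms have L: "L < length s" by simp
  consider "a \<ge> 2 \<or> b \<ge> 2 \<or> s ! L \<ge> 2" | "a \<in> {0,1}" "b \<in> {0,1}" "s ! L \<in> {0,1}"
    by fastforce
  then show "Rab g p (on_a (Rop g (p + q) L) (on_b (Rop g q L) w)) a b s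
           = on_b (Rop g q L) (on_a (Rop g (p + q) L) (Rab g p w)) a b s"
  proof cases
    case 1 then show ?thesis
      by (auto simp: on_a_def on_b_def Rab_def Rop_def Rmat_out_of_range)
  next
    case 2 then show ?thesis using L
      apply (simp add: on_a_def on_b_def Rab_def Rop_def)
      apply (elim disjE)
             apply (simp_all add: Rmat_def fa_def fb_def)
             apply (simp_all only: sinh_exp_simps)
             apply (simp_all add: field_simps)
      done
  qed
qed

lemma reflection_equation_K:
  "eq_on_len n (Rab g (l - u) (on_a (Kop h l) (Rab g (l + u) (on_b (Kop h u) v))))
               (on_b (Kop h u) (Rab g (l + u) (on_a (Kop h l) (Rab g (l - u) v))))"
  unfolding eq_on_len_def
proof (intro allI impI)
  fix a b :: nat and s :: "nat list"
  consider "a \<ge> 2 \<or> b \<ge> 2" | "a \<in> {0,1}" "b \<in> {0,1}"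
    by fastforce
  then show "Rab g (l - u) (on_a (Kop h l) (Rab g (l + u) (on_b (Kop h u) v))) a b s
           = on_b (Kop h u) (Rab g (l + u) (on_a (Kop h l) (Rab g (l - u) v))) a b s"
  proof cases
    case 1 then show ?thesis
      by (auto simp: on_a_def on_b_def Rab_def Kop_def Rmat_out_of_range)
  next
    case 2 then show ?thesis
      apply (simp add: on_a_def on_b_def Rab_def Kop_def)
      apply (elim disjE)
         apply (simp_all add: Rmat_def fa_def fb_def)
         apply (simp_all only: sinh_exp_simps)
         apply (simp_all add: field_simps)
      done
  qed
qed

section \<open>Structural properties of the double-row operator\<close>

lemma fold_closure:
  assumes "P id" "\<And>F G. P F \<Longrightarrow> P G \<Longrightarrow> P (F \<circ> G)" "\<And>p. p \<in> set ps \<Longrightarrow> P (f p)"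
  shows "P (fold f ps)"
  using assms(3) by (induction ps) (simp_all add: assms(1,2))

lemma DRop_closure:
  assumes id: "P id" and comp: "\<And>F G. P F \<Longrightarrow> P G \<Longrightarrow> P (F \<circ> G)"
    and R: "\<And>y p. p < length mu \<Longrightarrow> P (Rop g y p)" and K: "P (Kop h x)"
  shows "P (DRop g h mu x)"
proof -
  have "DRop g h mu x = fold (\<lambda>p. Rop g (x - mu ! p) p) [0..<length mu]
      \<circ> Kop h x \<circ> fold (\<lambda>p. Rop g (x + mu ! p) p) (rev [0..<length mu])"
    by (simp add: fun_eq_iff DRop_def)
  moreover have "P (fold (\<lambda>p. Rop g (x - mu ! p) p) [0..<length mu])"
    by (rule fold_closure[where P = P]) (auto intro: id comp R)
  moreover have "P (fold (\<lambda>p. Rop g (x + mu ! p) p) (rev [0..<length mu]))"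
    by (rule fold_closure[where P = P]) (auto intro: id comp R)
  ultimately show ?thesis
    using K by (simp add: comp)
qed

lemma DRop_Nil: "DRop g h [] x v = Kop h x v"
  by (simp add: DRop_def)

lemma DRop_snoc:
  "DRop g h (mu @ [m]) x v = Rop g (x - m) (length mu) (DRop g h mu x (Rop g (x + m) (length mu) v))"
proof -
  have "fold (\<lambda>p w. Rop g (x - (mu @ [m]) ! p) p w) [0..<length mu] u
      = fold (\<lambda>p w. Rop g (x - mu ! p) p w) [0..<length mu] u"
   and "fold (\<lambda>p w. Rop g (x + (mu @ [m]) ! p) p w) (rev [0..<length mu]) u
      = fold (\<lambda>p w. Rop g (x + mu ! p) p w) (rev [0..<length mu]) u" for u
    by (rule fold_cong; auto simp: nth_append)+
  then show ?thesis
    by (simp add: DRop_def)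
qed

definition length_local :: "(avec \<Rightarrow> avec) \<Rightarrow> bool" where
  "length_local F \<longleftrightarrow> (\<forall>n v w. (\<forall>a s. length s = n \<longrightarrow> v a s = w a s) \<longrightarrow>
                        (\<forall>a s. length s = n \<longrightarrow> F v a s = F w a s))"

lemma length_localD:
  "length_local F \<Longrightarrow> (\<And>a s. length s = n \<Longrightarrow> v a s = w a s) \<Longrightarrow> length s = n \<Longrightarrow> F v a s = F w a s"
  unfolding length_local_def by blast

lemma length_local_comp:
  assumes F: "length_local F" and G: "length_local G"
  shows "length_local (F \<circ> G)"
  unfolding length_local_def
proof (intro allI impI)
  fix n and v w :: avec and a :: nat and s :: "nat list"
  assume "\<forall>a s. length s = n \<longrightarrow> v a s = w a s" "length s = n"
  then show "(F \<circ> G) v a s = (F \<circ> G) w a s"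
    unfolding comp_apply by (intro length_localD[OF F] length_localD[OF G]) auto
qed

lemma length_local_Rop: "length_local (Rop g x p)"
  unfolding length_local_def Rop_def by simp

lemma length_local_DRop: "length_local (DRop g h mu x)"
  by (rule DRop_closure[where P = length_local, OF _ length_local_comp length_local_Rop])
    (simp_all add: length_local_def Kop_def)

definition aux_local :: "(avec \<Rightarrow> avec) \<Rightarrow> bool" where
  "aux_local F \<longleftrightarrow> (\<forall>v w. (\<forall>a s. a \<le> 1 \<longrightarrow> v a s = w a s) \<longrightarrow> (\<forall>a s. a \<le> 1 \<longrightarrow> F v a s = F w a s))"

lemma aux_localD:
  "aux_local F \<Longrightarrow> (\<And>a s. a \<le> 1 \<Longrightarrow> v a s = w a s) \<Longrightarrow> a \<le> 1 \<Longrightarrow> F v a s = F w a s"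
  unfolding aux_local_def by blast

lemma aux_local_comp:
  assumes F: "aux_local F" and G: "aux_local G"
  shows "aux_local (F \<circ> G)"
  unfolding aux_local_def
proof (intro allI impI)
  fix v w :: avec and a :: nat and s :: "nat list"
  assume "\<forall>a s. a \<le> 1 \<longrightarrow> v a s = w a s" "a \<le> 1"
  then show "(F \<circ> G) v a s = (F \<circ> G) w a s"
    unfolding comp_apply by (intro aux_localD[OF F] aux_localD[OF G]) auto
qed

lemma aux_local_DRop: "aux_local (DRop g h mu x)"
  by (rule DRop_closure[where P = aux_local, OF _ aux_local_comp])
    (simp_all add: aux_local_def Rop_def Kop_def)

definition linear_op :: "(avec \<Rightarrow> avec) \<Rightarrow> bool" where
  "linear_op F \<longleftrightarrow>
     (\<forall>c1 c2 v w. F (\<lambda>a s. c1 * v a s + c2 * w a s) = (\<lambda>a s. c1 * F v a s + c2 * F w a s))"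

lemma linear_op_DRop: "linear_op (DRop g h mu x)"
proof (rule DRop_closure[where P = linear_op])
  show "linear_op (Rop g y p)" for y p
    unfolding linear_op_def Rop_def by (simp add: fun_eq_iff sum_distrib_left sum.distrib algebra_simps)
  show "linear_op (Kop h x)"
    unfolding linear_op_def Kop_def by (simp add: fun_eq_iff algebra_simps)
qed (simp_all add: linear_op_def)

lemma linear_opD:
  "linear_op F \<Longrightarrow> F (\<lambda>a s. c1 * v a s + c2 * w a s) a s = c1 * F v a s + c2 * F w a s"
  unfolding linear_op_def by simp

lemma linear_op_zero: "linear_op F \<Longrightarrow> F (\<lambda>a s. 0) = (\<lambda>a s. 0)"
  using linear_opD[of F 0 "\<lambda>a s. 0" 0 "\<lambda>a s. 0"] by (simp add: fun_eq_iff)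

lemma linear_op_sum:
  assumes "linear_op F" "finite Q"
  shows "F (\<lambda>a s. \<Sum>q\<in>Q. f q a s) a s = (\<Sum>q\<in>Q. F (f q) a s)"
  using assms(2)
proof (induction Q arbitrary: a s)
  case empty then show ?case using linear_op_zero[OF assms(1)] by simp
next
  case (insert q Q)
  then show ?case
    using linear_opD[OF assms(1), of 1 "f q" 1 "\<lambda>a s. \<Sum>q\<in>Q. f q a s"] by simp
qed

lemma Rop_on_a_on_b_commute:
  "p \<noteq> q \<Longrightarrow> on_a (Rop g x p) (on_b (Rop g y q) v) = on_b (Rop g y q) (on_a (Rop g x p) v)"
  by (auto simp: fun_eq_iff on_a_def on_b_def Rop_def list_update_swap sum_distrib_left
      algebra_simps intro: sum.swap)

lemma DRop_on_a_commute:
  assumes "length mu \<le> L"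
  shows "on_a (DRop g h mu x) (on_b (Rop g y L) v) = on_b (Rop g y L) (on_a (DRop g h mu x) v)"
proof -
  have "\<forall>v. on_a (DRop g h mu x) (on_b (Rop g y L) v) = on_b (Rop g y L) (on_a (DRop g h mu x) v)"
  proof (rule DRop_closure[where P = "\<lambda>F. \<forall>v. on_a F (on_b (Rop g y L) v) = on_b (Rop g y L) (on_a F v)"])
    show "\<forall>v. on_a (F \<circ> G) (on_b (Rop g y L) v) = on_b (Rop g y L) (on_a (F \<circ> G) v)"
      if "\<forall>v. on_a F (on_b (Rop g y L) v) = on_b (Rop g y L) (on_a F v)"
         "\<forall>v. on_a G (on_b (Rop g y L) v) = on_b (Rop g y L) (on_a G v)" for F G
      using that by (simp add: on_a_comp)
    show "\<forall>v. on_a (Rop g y' p) (on_b (Rop g y L) v) = on_b (Rop g y L) (on_a (Rop g y' p) v)"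
      if "p < length mu" for y' p
      using that assms by (simp add: Rop_on_a_on_b_commute)
    show "\<forall>v. on_a (Kop h x) (on_b (Rop g y L) v) = on_b (Rop g y L) (on_a (Kop h x) v)"
      by (auto simp: fun_eq_iff on_a_def on_b_def Rop_def Kop_def sum_distrib_left algebra_simps)
  qed (simp add: on_a_def)
  then show ?thesis by blast
qed

lemma DRop_on_b_commute:
  assumes "length mu \<le> L"
  shows "on_b (DRop g h mu x) (on_a (Rop g y L) v) = on_a (Rop g y L) (on_b (DRop g h mu x) v)"
proof -
  have "\<forall>v. on_b (DRop g h mu x) (on_a (Rop g y L) v) = on_a (Rop g y L) (on_b (DRop g h mu x) v)"
  proof (rule DRop_closure[where P = "\<lambda>F. \<forall>v. on_b F (on_a (Rop g y L) v) = on_a (Rop g y L) (on_b F v)"])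
    show "\<forall>v. on_b (F \<circ> G) (on_a (Rop g y L) v) = on_a (Rop g y L) (on_b (F \<circ> G) v)"
      if "\<forall>v. on_b F (on_a (Rop g y L) v) = on_a (Rop g y L) (on_b F v)"
         "\<forall>v. on_b G (on_a (Rop g y L) v) = on_a (Rop g y L) (on_b G v)" for F G
      using that by (simp add: on_b_comp)
    show "\<forall>v. on_b (Rop g y' p) (on_a (Rop g y L) v) = on_a (Rop g y L) (on_b (Rop g y' p) v)"
      if "p < length mu" for y' p
      using that assms Rop_on_a_on_b_commute[of L p g y y'] by simp
    show "\<forall>v. on_b (Kop h x) (on_a (Rop g y L) v) = on_a (Rop g y L) (on_b (Kop h x) v)"
      by (auto simp: fun_eq_iff on_a_def on_b_def Rop_def Kop_def sum_distrib_left algebra_simps)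
  qed (simp add: on_b_def)
  then show ?thesis by blast
qed

section \<open>The reflection equation\<close>

lemma eq_on_len_on_a:
  "length_local F \<Longrightarrow> eq_on_len n v w \<Longrightarrow> eq_on_len n (on_a F v) (on_a F w)"
  unfolding eq_on_len_def on_a_def by (blast intro: length_localD)

lemma eq_on_len_on_b:
  "length_local F \<Longrightarrow> eq_on_len n v w \<Longrightarrow> eq_on_len n (on_b F v) (on_b F w)"
  unfolding eq_on_len_def on_b_def by (blast intro: length_localD)

lemma eq_on_len_Rab: "eq_on_len n v w \<Longrightarrow> eq_on_len n (Rab g x v) (Rab g x w)"
  unfolding eq_on_len_def Rab_def by simp

lemmas eq_on_len_intros = eq_on_len_on_a eq_on_len_on_b eq_on_len_Rab length_local_Rop length_local_DRop

text \<open>Induction on the number of sites: the new site is moved through the double row by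
  the Yang--Baxter equation on both sides of the reflection equation for the shorter chain.\<close>

theorem reflection_equation:
  "length mu \<le> n \<Longrightarrow>
   eq_on_len n (Rab g (l - u) (on_a (DRop g h mu l) (Rab g (l + u) (on_b (DRop g h mu u) v))))
               (on_b (DRop g h mu u) (Rab g (l + u) (on_a (DRop g h mu l) (Rab g (l - u) v))))"
proof (induction mu arbitrary: v rule: rev_induct)
  case Nil
  have "DRop g h [] x = Kop h x" for x by (simp add: fun_eq_iff DRop_Nil)
  then show ?case using reflection_equation_K by simp
next
  case (snoc m mu)
  let ?L = "length mu"
  have L: "?L < n" using snoc.prems by simp
  note IH = snoc.IH[OF less_imp_le[OF L]]
  let ?Ua = "on_a (DRop g h mu l)" and ?Ub = "on_b (DRop g h mu u)"
  let ?aP = "on_a (Rop g (l + m) ?L)" and ?aM = "on_a (Rop g (l - m) ?L)"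
  let ?bP = "on_b (Rop g (u + m) ?L)" and ?bM = "on_b (Rop g (u - m) ?L)"
  have cA: "?Ua (on_b (Rop g y ?L) w) = on_b (Rop g y ?L) (?Ua w)" for y w
    by (rule DRop_on_a_commute) simp
  have cB: "?Ub (on_a (Rop g y ?L) w) = on_a (Rop g y ?L) (?Ub w)" for y w
    by (rule DRop_on_b_commute) simp
  have "eq_on_len n (Rab g (l - u) (?aM (?Ua (?aP (Rab g (l + u) (?bM (?Ub (?bP v))))))))
                    (Rab g (l - u) (?aM (?Ua (?bM (Rab g (l + u) (?aP (?Ub (?bP v))))))))"
    by (intro eq_on_len_intros yang_baxter_Rab_middle L) simp
  also have "\<dots> = Rab g (l - u) (?aM (?bM (?Ua (Rab g (l + u) (?Ub (?aP (?bP v)))))))"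
    by (simp add: cA cB)
  also have "eq_on_len n \<dots> (?bM (?aM (Rab g (l - u) (?Ua (Rab g (l + u) (?Ub (?aP (?bP v))))))))"
    by (intro yang_baxter_Rab_left L) simp
  also have "eq_on_len n \<dots> (?bM (?aM (?Ub (Rab g (l + u) (?Ua (Rab g (l - u) (?aP (?bP v))))))))"
    by (intro eq_on_len_intros IH)
  also have "eq_on_len n \<dots> (?bM (?aM (?Ub (Rab g (l + u) (?Ua (?bP (?aP (Rab g (l - u) v))))))))"
    by (intro eq_on_len_intros yang_baxter_Rab_left L) simp
  also have "\<dots> = ?bM (?Ub (?aM (Rab g (l + u) (?bP (?Ua (?aP (Rab g (l - u) v)))))))"
    by (simp add: cA cB)
  also have "eq_on_len n \<dots> (?bM (?Ub (?bP (Rab g (l + u) (?aM (?Ua (?aP (Rab g (l - u) v))))))))"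
    by (intro eq_on_len_intros yang_baxter_Rab_middle L) simp
  finally show ?case
    by (simp add: on_a_def on_b_def DRop_snoc)
qed

lemma DRop_eq_sum_Top:
  assumes "i \<le> 1"
  shows "DRop g h mu x v i s = (\<Sum>e\<in>{0,1}. Top g h mu i e x (v e) s)"
proof -
  let ?v = "\<lambda>e t0 t. if t0 = e then v e t else 0"
  have "DRop g h mu x v i s = DRop g h mu x (\<lambda>a s. \<Sum>e\<in>{0,1}. ?v e a s) i s"
    by (rule aux_localD[OF aux_local_DRop _ assms]) auto
  also have "\<dots> = (\<Sum>e\<in>{0,1}. DRop g h mu x (?v e) i s)"
    by (rule linear_op_sum[OF linear_op_DRop]) simp
  finally show ?thesis by (simp add: Top_def)
qed

lemma Top_linear:
  "Top g h mu i j x (\<lambda>s. a * w1 s + b * w2 s) = (\<lambda>s. a * Top g h mu i j x w1 s + b * Top g h mu i j x w2 s)"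
proof -
  have eq: "(\<lambda>t0 t. if t0 = j then a * w1 t + b * w2 t else 0)
      = (\<lambda>t0 t. a * (if t0 = j then w1 t else 0) + b * (if t0 = j then w2 t else 0))"
    by (simp add: fun_eq_iff)
  show ?thesis
    unfolding Top_def eq by (simp add: linear_op_DRop[unfolded linear_op_def])
qed

lemma Top_scale: "Top g h mu i j x (\<lambda>s. c * f s) = (\<lambda>s. c * Top g h mu i j x f s)"
  using Top_linear[of g h mu i j x c f 0 f] by simp

lemma Top_add: "Top g h mu i j x (\<lambda>s. f1 s + f2 s) = (\<lambda>s. Top g h mu i j x f1 s + Top g h mu i j x f2 s)"
  using Top_linear[of g h mu i j x 1 f1 1 f2] by simp

lemma Top_sum:
  "finite Q \<Longrightarrow> Top g h mu i j x (\<lambda>s. \<Sum>q\<in>Q. f q s) = (\<lambda>s. \<Sum>q\<in>Q. Top g h mu i j x (f q) s)"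
proof (induction Q rule: finite_induct)
  case empty then show ?case using Top_scale[of g h mu i j x 0 "\<lambda>s. 0"] by simp
next
  case (insert q Q) then show ?case by (simp add: Top_add)
qed

lemma Top_local:
  "(\<And>s. length s = length mu \<Longrightarrow> w1 s = w2 s) \<Longrightarrow> length s = length mu \<Longrightarrow>
   Top g h mu i j x w1 s = Top g h mu i j x w2 s"
  unfolding Top_def by (rule length_localD[OF length_local_DRop]) auto

text \<open>The entry \<open>(i\<^sub>1 i\<^sub>2, j\<^sub>1 j\<^sub>2)\<close> of the reflection equation
  \<open>R\<^sub>a\<^sub>b(\<lambda> - u) U\<^sub>a(\<lambda>) R\<^sub>a\<^sub>b(\<lambda> + u) U\<^sub>b(u) = U\<^sub>b(u) R\<^sub>a\<^sub>b(\<lambda> + u) U\<^sub>a(\<lambda>) R\<^sub>a\<^sub>b(\<lambda> - u)\<close>,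
  written in terms of the operators \<open>Top\<close>.\<close>

lemma reflection_equation_entry:
  assumes ij: "i1 \<le> 1" "i2 \<le> 1" "j1 \<le> 1" "j2 \<le> 1" and len: "length mu \<le> length s"
  shows "(\<Sum>k\<in>{0,1}. \<Sum>d\<in>{0,1}. Rmat g (l-u) i1 i2 k d *
           (\<Sum>e\<in>{0,1}. \<Sum>d'\<in>{0,1}. Rmat g (l+u) e d j1 d' * Top g h mu k e l (Top g h mu d' j2 u w) s))
       = (\<Sum>f\<in>{0,1}. \<Sum>a'\<in>{0,1}. \<Sum>d\<in>{0,1}. Rmat g (l+u) i1 f a' d *
           (\<Sum>c\<in>{0,1}. Rmat g (l-u) c d j1 j2 * Top g h mu i2 f u (Top g h mu a' c l w) s))"
proof -
  define v :: avec2 where "v = (\<lambda>c d s. if c = j1 \<and> d = j2 then w s else 0)"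
  have j: "j1 \<in> {0,1}" "j2 \<in> {0,1}" using ij by auto
  have ub: "on_b (DRop g h mu u) v = (\<lambda>c d s'. if c = j1 then Top g h mu d j2 u w s' else 0)"
  proof (intro ext)
    fix c d s'
    show "on_b (DRop g h mu u) v c d s' = (if c = j1 then Top g h mu d j2 u w s' else 0)"
    proof (cases "c = j1")
      case True then show ?thesis by (simp add: on_b_def v_def Top_def)
    next
      case False
      then have "(\<lambda>e s''. v c e s'') = (\<lambda>a s. 0)" by (simp add: v_def fun_eq_iff)
      then show ?thesis using False by (simp add: on_b_def linear_op_zero[OF linear_op_DRop])
    qed
  qed
  define G where "G = (\<lambda>e d s'. \<Sum>d'\<in>{0,1}. Rmat g (l+u) e d j1 d' * Top g h mu d' j2 u w s')"
  have "Rab g (l+u) (on_b (DRop g h mu u) v) = G"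
    unfolding ub G_def Rab_def using j by (auto simp: fun_eq_iff)
  then have lhs: "Rab g (l-u) (on_a (DRop g h mu l) (Rab g (l+u) (on_b (DRop g h mu u) v))) i1 i2 s =
      (\<Sum>k\<in>{0,1}. \<Sum>d\<in>{0,1}. Rmat g (l-u) i1 i2 k d *
           (\<Sum>e\<in>{0,1}. \<Sum>d'\<in>{0,1}. Rmat g (l+u) e d j1 d' * Top g h mu k e l (Top g h mu d' j2 u w) s))"
    by (simp add: Rab_def on_a_def DRop_eq_sum_Top G_def Top_sum Top_scale Top_add)
  define H1 where "H1 = (\<lambda>c d s'. Rmat g (l-u) c d j1 j2 * w s')"
  have r1: "Rab g (l-u) v = H1"
    unfolding H1_def Rab_def v_def using j by (auto simp: fun_eq_iff)
  have ua: "on_a (DRop g h mu l) H1 a' d s' = (\<Sum>c\<in>{0,1}. Rmat g (l-u) c d j1 j2 * Top g h mu a' c l w s')"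
    if "a' \<le> 1" for a' d s'
    unfolding on_a_def DRop_eq_sum_Top[OF that] H1_def by (simp add: Top_scale)
  have rhs: "on_b (DRop g h mu u) (Rab g (l+u) (on_a (DRop g h mu l) (Rab g (l-u) v))) i1 i2 s =
      (\<Sum>f\<in>{0,1}. \<Sum>a'\<in>{0,1}. \<Sum>d\<in>{0,1}. Rmat g (l+u) i1 f a' d *
           (\<Sum>c\<in>{0,1}. Rmat g (l-u) c d j1 j2 * Top g h mu i2 f u (Top g h mu a' c l w) s))"
    unfolding r1 on_b_def DRop_eq_sum_Top[OF ij(2)]
    by (simp add: Rab_def ua Top_sum Top_scale Top_add sum_distrib_left)
  show ?thesis
    using reflection_equation[OF len, of g l u h v] lhs rhs unfolding eq_on_len_def by simp
qed

section \<open>Removing genericity conditions by continuity\<close>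

definition continuous_family :: "(complex \<Rightarrow> avec) \<Rightarrow> bool" where
  "continuous_family V \<longleftrightarrow> (\<forall>a s. continuous_on UNIV (\<lambda>x. V x a s))"

lemma continuous_on_if_const [continuous_intros]:
  "continuous_on S F \<Longrightarrow> continuous_on S G \<Longrightarrow> continuous_on S (\<lambda>x. if P then F x else G x)"
  by (cases P) auto

lemma continuous_family_Rop:
  "continuous_family V \<Longrightarrow> continuous_on UNIV f \<Longrightarrow> continuous_family (\<lambda>x. Rop g (f x) p (V x))"
  unfolding continuous_family_def Rop_def Rmat_def fa_def fb_def
  by (auto intro!: continuous_intros)

lemma continuous_family_Kop:
  "continuous_family V \<Longrightarrow> continuous_on UNIV f \<Longrightarrow> continuous_family (\<lambda>x. Kop h (f x) (V x))"
  unfolding continuous_family_def Kop_def by (auto intro!: continuous_intros)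

lemma continuous_family_fold:
  assumes "\<And>p V. continuous_family V \<Longrightarrow> continuous_family (\<lambda>x. F p x (V x))" "continuous_family V"
  shows "continuous_family (\<lambda>x. fold (\<lambda>p w. F p x w) ps (V x))"
  using assms(2) by (induction ps arbitrary: V) (simp_all add: assms(1))

lemma continuous_family_DRop:
  assumes "continuous_family V" "continuous_on UNIV f"
  shows "continuous_family (\<lambda>x. DRop g h mu (f x) (V x))"
  unfolding DRop_def
  by (intro continuous_family_fold continuous_family_Kop continuous_family_Rop continuous_intros assms)

lemma continuous_on_Top [continuous_intros]:
  fixes W :: "complex \<Rightarrow> qvec"
  assumes "\<And>s. continuous_on UNIV (\<lambda>x. W x s)" "continuous_on UNIV f"
  shows "continuous_on UNIV (\<lambda>x. Top g h mu i j (f x) (W x) s)"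
proof -
  have "continuous_family (\<lambda>x t0 t. if t0 = j then W x t else 0)"
    unfolding continuous_family_def using assms(1) by (auto intro!: continuous_intros)
  from continuous_family_DRop[OF this assms(2)] show ?thesis
    unfolding continuous_family_def Top_def by blast
qed

lemma sinh_eq_0_Re: "sinh (w::complex) = 0 \<Longrightarrow> Re w = 0"
proof -
  assume "sinh w = 0"
  then have "exp w = exp (-w)" by (simp add: sinh_def scaleR_conv_of_real)
  then have "exp (Re w) = exp (- Re w)" by (metis Re_exp norm_exp_eq_Re uminus_complex.sel(1))
  then show "Re w = 0" by simp
qed

text \<open>Each \<open>sinh (k z + c)\<close> with \<open>k \<noteq> 0\<close> vanishes at only finitely many points of the real
  line \<open>z\<^sub>0 + t\<close>, so \<open>f\<close> vanishes at \<open>z\<^sub>0 + 1/(n+1)\<close> for all large \<open>n\<close>.\<close>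

lemma continuous_zero_off_sinh_zeros:
  fixes f :: "complex \<Rightarrow> complex"
  assumes cont: "continuous_on UNIV f"
    and ks: "\<forall>(k,c)\<in>set ps. k \<noteq> 0"
    and H: "\<And>z. (\<forall>(k,c)\<in>set ps. sinh (of_real k * z + c) \<noteq> 0) \<Longrightarrow> f z = 0"
  shows "f z0 = 0"
proof -
  define bad where "bad = (\<lambda>(k,c). - Re (of_real k * z0 + c) / k) ` set ps"
  define t where "t = (\<lambda>n::nat. 1 / real (Suc n))"
  have "finite {n. t n \<in> bad}"
    using finite_vimageI[of bad t] unfolding bad_def t_def inj_def by (simp add: vimage_def)
  then have "eventually (\<lambda>n. t n \<notin> bad) sequentially"
    by (metis (mono_tags, lifting) eventually_sequentially finite_nat_set_iff_bounded
        mem_Collect_eq not_le)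
  then have "eventually (\<lambda>n. f (z0 + of_real (t n)) = 0) sequentially"
  proof (rule eventually_mono)
    fix n assume nb: "t n \<notin> bad"
    show "f (z0 + of_real (t n)) = 0"
    proof (rule H, intro ballI, clarify)
      fix k c assume kc: "(k, c) \<in> set ps" and z: "sinh (of_real k * (z0 + of_real (t n)) + c) = 0"
      from sinh_eq_0_Re[OF z] have "Re (of_real k * z0 + c) + k * t n = 0"
        by (simp add: algebra_simps)
      then have "t n = - Re (of_real k * z0 + c) / k" using ks kc by (auto simp: field_simps)
      then show False using nb kc unfolding bad_def by force
    qed
  qed
  then have "(\<lambda>n. f (z0 + of_real (t n))) \<longlonglongrightarrow> 0"
    by (rule tendsto_eventually)
  moreover have "t \<longlonglongrightarrow> 0"
    unfolding t_def using LIMSEQ_inverse_real_of_nat by (simp add: inverse_eq_divide)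
  then have "(\<lambda>n. z0 + of_real (t n)) \<longlonglongrightarrow> z0 + of_real 0"
    by (intro tendsto_intros)
  then have "(\<lambda>n. f (z0 + of_real (t n))) \<longlonglongrightarrow> f z0"
    using cont isCont_tendsto_compose[of z0 f] by (simp add: continuous_on_eq_continuous_at)
  ultimately show ?thesis using LIMSEQ_unique by blast
qed

lemma eq_by_continuity_off_sinh_zeros:
  fixes P Q :: "complex \<Rightarrow> complex"
  assumes "continuous_on UNIV P" "continuous_on UNIV Q"
    and "\<And>z. fa g (z - y) * fb (z + y) * P z = fb (z + y) * fa g (z - y) * Q z"
  shows "P x = Q x"
proof -
  have "P x - Q x = 0"
  proof (rule continuous_zero_off_sinh_zeros[where f = "\<lambda>z. P z - Q z" and ps = "[(1, g - y), (1, y)]"])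
    fix z assume "\<forall>(k, c)\<in>set [(1::real, g - y), (1, y)]. sinh (complex_of_real k * z + c) \<noteq> 0"
    then have "fa g (z - y) \<noteq> 0" "fb (z + y) \<noteq> 0" by (simp_all add: fa_def fb_def algebra_simps)
    then show "P z - Q z = 0" using assms(3)[of z] by simp
  qed (use assms(1,2) in \<open>auto intro: continuous_intros\<close>)
  then show ?thesis by simp
qed

section \<open>Exchange coefficients\<close>

text \<open>The coefficients of the exchange relations
  \<open>A(x) B(y) = coefA B(y) A(x) + coefAA B(x) A(y) + coefAD B(x) D\<^sup>~(y)\<close> and
  \<open>D\<^sup>~(x) B(y) = coefD B(y) D\<^sup>~(x) + coefDD B(x) D\<^sup>~(y) + coefDA B(x) A(y)\<close>,
  where \<open>D\<^sup>~(x) = D(x) - sinh \<gamma> / a(2x) A(x)\<close>.\<close>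

definition coefA :: "complex \<Rightarrow> complex \<Rightarrow> complex \<Rightarrow> complex" where
  "coefA g x y = fa g (y - x) * fb (x + y) / (fb (y - x) * fa g (x + y))"

definition coefAA :: "complex \<Rightarrow> complex \<Rightarrow> complex \<Rightarrow> complex" where
  "coefAA g x y = sinh g * fb (2 * y) / (fb (x - y) * fa g (2 * y))"

definition coefAD :: "complex \<Rightarrow> complex \<Rightarrow> complex \<Rightarrow> complex" where
  "coefAD g x y = - sinh g / fa g (x + y)"

definition coefD :: "complex \<Rightarrow> complex \<Rightarrow> complex \<Rightarrow> complex" where
  "coefD g x y = fa g (x - y) * fa g (x + y + g) / (fb (x - y) * fb (x + y + g))"

definition coefDD :: "complex \<Rightarrow> complex \<Rightarrow> complex \<Rightarrow> complex" where
  "coefDD g x y = - sinh g * fa g (2 * x + g) / (fb (2 * x + g) * fb (x - y))"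

definition coefDA :: "complex \<Rightarrow> complex \<Rightarrow> complex \<Rightarrow> complex" where
  "coefDA g x y = sinh g * fb (2 * y) * fa g (2 * x + g) / (fa g (2 * x) * fa g (2 * y) * fa g (x + y))"

definition generic_pair :: "complex \<Rightarrow> complex \<Rightarrow> complex \<Rightarrow> bool" where
  "generic_pair g x y \<longleftrightarrow> fb (x - y) \<noteq> 0 \<and> fa g (x + y) \<noteq> 0 \<and> fa g (2 * x) \<noteq> 0 \<and> fa g (2 * y) \<noteq> 0"

lemma generic_pair_nonzero:
  assumes "generic_pair g x y"
  shows "fb (x - y) \<noteq> 0" "fb (y - x) \<noteq> 0" "fa g (x + y) \<noteq> 0" "fa g (y + x) \<noteq> 0"
    "fa g (2 * x) \<noteq> 0" "fa g (2 * y) \<noteq> 0" "fb (x + y + g) \<noteq> 0" "fb (2 * x + g) \<noteq> 0"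
    "fb (2 * y + g) \<noteq> 0"
  using assms fb_minus[of x y] unfolding generic_pair_def
  by (auto simp: add.commute fa_def fb_def)

lemma generic_pair_sym: "generic_pair g x y \<Longrightarrow> generic_pair g y x"
  unfolding generic_pair_def using fb_minus[of x y] by (auto simp: add.commute)

text \<open>The four consistency identities below make the coefficients of the unwanted terms
  independent of the order in which the \<open>B\<close>-operators are passed. Each is proved in two
  steps: a field identity in which every weight is an indeterminate, reducing it to a
  polynomial relation between the weights, and that relation in \<open>sinh\<close>.\<close>

lemma coefAA_consistency_field:
  fixes c A_2y A_yx B_xpy B_yx A_xpy B_2z B_xz A_2z B_2y B_yz A_2yg A_ypz A_yz B_ypz :: complex
  assumes n: "B_yx \<noteq> 0" "A_xpy \<noteq> 0" "B_xz \<noteq> 0" "A_2z \<noteq> 0" "A_2y \<noteq> 0" "B_yz \<noteq> 0" "A_ypz \<noteq> 0"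
  and P: "A_2y*A_yx*B_xpy*B_yz*A_ypz - A_2y*A_yz*B_ypz*B_yx*A_xpy - c*B_2y*A_xpy*A_ypz*B_xz
          - c*A_2yg*B_yx*B_yz*B_xz = 0"
  shows "(A_yx*B_xpy/(B_yx*A_xpy)) * (c*B_2z/(B_xz*A_2z)) + (c*B_2y/((-B_yx)*A_2y)) * (c*B_2z/(B_yz*A_2z))
     + (-c/A_xpy) * (c*B_2z*A_2yg/(A_2y*A_2z*A_ypz)) = (c*B_2z/(B_xz*A_2z)) * (A_yz*B_ypz/(B_yz*A_ypz))"
  using n
  apply (simp add: field_simps)
  using P by algebra

lemma coefAA_consistency:
  assumes "generic_pair g x y" "generic_pair g x z" "generic_pair g y z"
  shows "coefA g x y * coefAA g x z + coefAA g x y * coefAA g y z + coefAD g x y * coefDA g y z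
       = coefAA g x z * coefA g z y"
proof -
  have trig: "fa g (2*y)*fa g (y-x)*fb (x+y)*fb (y-z)*fa g (y+z) - fa g (2*y)*fa g (y-z)*fb (y+z)*fb (y-x)*fa g (x+y)
    - sinh g*fb (2*y)*fa g (x+y)*fa g (y+z)*fb (x-z) - sinh g*fa g (2*y+g)*fb (y-x)*fb (y-z)*fb (x-z) = 0"
    unfolding fa_def fb_def by (simp only: sinh_exp_simps) (simp add: field_simps)
  show ?thesis
    unfolding coefA_def coefAA_def coefAD_def coefDA_def fb_minus[of x y]
      add.commute[of z y]
    by (rule coefAA_consistency_field[OF _ _ _ _ _ _ _ trig])
      (use generic_pair_nonzero[OF assms(1)] generic_pair_nonzero[OF assms(2)]
        generic_pair_nonzero[OF assms(3)] in auto)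
qed

lemma coefAD_consistency_field:
  fixes c ayx bxy a2y ayz byz b2y axz axy a2yg byx azy ayzg :: complex
  assumes n: "byx \<noteq> 0" "axy \<noteq> 0" "a2y \<noteq> 0" "byz \<noteq> 0" "axz \<noteq> 0" "ayz \<noteq> 0"
  and P: "ayx * bxy * a2y * ayz * byz - c * b2y * axz * axy * byz
   - c * a2yg * axz * byx * ayz + azy * ayzg * a2y * byx * axy = 0"
  shows "(ayx * bxy / (byx * axy)) * (- c / axz) + (c * b2y / ((- byx) * a2y)) * (- c / ayz)
     + (- c / axy) * (- c * a2yg / (a2y * byz)) = (- c / axz) * (azy * ayzg / ((- byz) * ayz))"
  using n
  apply (simp add: field_simps)
  using P by algebra

lemma coefAD_consistency:
  assumes "generic_pair g x y" "generic_pair g x z" "generic_pair g y z"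
  shows "coefA g x y * coefAD g x z + coefAA g x y * coefAD g y z + coefAD g x y * coefDD g y z
       = coefAD g x z * coefD g z y"
proof -
  have trig: "fa g (y-x) * fb (x+y) * fa g (2*y) * fa g (y+z) * fb (y-z) - sinh g * fb (2*y) * fa g (x+z) * fa g (x+y) * fb (y-z)
   - sinh g * fa g (2*y+g) * fa g (x+z) * fb (y-x) * fa g (y+z) + fa g (z-y) * fa g (y+z+g) * fa g (2*y) * fb (y-x) * fa g (x+y) = 0"
    unfolding fa_def fb_def by (simp only: sinh_exp_simps) (simp add: field_simps)
  show ?thesis
    unfolding coefA_def coefAA_def coefAD_def coefDD_def coefD_def fb_minus[of x y] fb_double_add_gamma
      fb_minus[of z y] add.commute[of z y] fb_add_gamma
    by (rule coefAD_consistency_field[OF _ _ _ _ _ _ trig])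
      (use generic_pair_nonzero[OF assms(1)] generic_pair_nonzero[OF assms(2)]
        generic_pair_nonzero[OF assms(3)] in auto)
qed

lemma coefDD_consistency_field:
  fixes c A_2y A_xy A_xpyg B_zy A_ypz A_zy A_ypzg B_xy A_xpy A_2yg B_xz B_2y A_2xg A_2x :: complex
  assumes n: "B_xy \<noteq> 0" "A_xpy \<noteq> 0" "A_2x \<noteq> 0" "B_xz \<noteq> 0" "A_2y \<noteq> 0" "B_zy \<noteq> 0" "A_ypz \<noteq> 0"
  and P: "A_2y*A_xy*A_xpyg*B_zy*A_ypz - A_2y*A_zy*A_ypzg*B_xy*A_xpy + c*A_2yg*A_xpy*A_ypz*B_xz
          + c*B_2y*B_xy*B_zy*B_xz = 0"
  shows "(A_xy*A_xpyg/(B_xy*A_xpy)) * (-c*A_2xg/(A_2x*B_xz)) + (-c*A_2xg/(A_2x*B_xy)) * (-c*A_2yg/(A_2y*(-B_zy)))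
     + (c*B_2y*A_2xg/(A_2x*A_2y*A_xpy)) * (-c/A_ypz) = (-c*A_2xg/(A_2x*B_xz)) * (A_zy*A_ypzg/(B_zy*A_ypz))"
  using n
  apply (simp add: field_simps)
  using P by algebra

lemma coefDD_consistency:
  assumes "generic_pair g x y" "generic_pair g x z" "generic_pair g y z"
  shows "coefD g x y * coefDD g x z + coefDD g x y * coefDD g y z + coefDA g x y * coefAD g y z
       = coefDD g x z * coefD g z y"
proof -
  have trig: "fa g (2*y)*fa g (x-y)*fa g (x+y+g)*fb (z-y)*fa g (y+z) - fa g (2*y)*fa g (z-y)*fa g (y+z+g)*fb (x-y)*fa g (x+y)
   + sinh g*fa g (2*y+g)*fa g (x+y)*fa g (y+z)*fb (x-z) + sinh g*fb (2*y)*fb (x-y)*fb (z-y)*fb (x-z) = 0"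
    unfolding fa_def fb_def by (simp only: sinh_exp_simps) (simp add: field_simps)
  show ?thesis
    unfolding coefD_def coefDD_def coefDA_def coefAD_def fb_add_gamma fb_double_add_gamma
      fb_minus[of y z] add.commute[of z y]
    by (rule coefDD_consistency_field[OF _ _ _ _ _ _ _ trig])
      (use generic_pair_nonzero[OF assms(1)] generic_pair_nonzero[OF assms(2)]
        generic_pair_nonzero[OF assms(3)] fb_minus[of y z] in auto)
qed

lemma coefDA_consistency_field:
  fixes c A_2y A_xy A_xpyg B_yz A_ypz A_yz B_ypz B_xy A_xpy A_2yg A_xpz B_2y B_2z A_2z A_2xg A_2x :: complex
  assumes n: "B_xy \<noteq> 0" "A_xpy \<noteq> 0" "A_2x \<noteq> 0" "A_2z \<noteq> 0" "A_xpz \<noteq> 0" "A_2y \<noteq> 0" "A_ypz \<noteq> 0" "B_yz \<noteq> 0"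
  and P: "A_2y*(A_xy*A_xpyg*B_yz*A_ypz - A_yz*B_ypz*B_xy*A_xpy) - c*A_2yg*A_xpy*B_yz*A_xpz
          + c*B_2y*B_xy*A_ypz*A_xpz = 0"
  shows "(A_xy*A_xpyg/(B_xy*A_xpy)) * (c*B_2z*A_2xg/(A_2x*A_2z*A_xpz))
     + (-c*A_2xg/(A_2x*B_xy)) * (c*B_2z*A_2yg/(A_2y*A_2z*A_ypz))
     + (c*B_2y*A_2xg/(A_2x*A_2y*A_xpy)) * (c*B_2z/(B_yz*A_2z))
     = (c*B_2z*A_2xg/(A_2x*A_2z*A_xpz)) * (A_yz*B_ypz/(B_yz*A_ypz))"
  using n
  apply (simp add: field_simps)
  using P by algebra

lemma coefDA_consistency:
  assumes "generic_pair g x y" "generic_pair g x z" "generic_pair g y z"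
  shows "coefD g x y * coefDA g x z + coefDD g x y * coefDA g y z + coefDA g x y * coefAA g y z
       = coefDA g x z * coefA g z y"
proof -
  have trig: "fa g (2*y)*(fa g (x-y)*fa g (x+y+g)*fb (y-z)*fa g (y+z) - fa g (y-z)*fb (y+z)*fb (x-y)*fa g (x+y))
   - sinh g*fa g (2*y+g)*fa g (x+y)*fb (y-z)*fa g (x+z) + sinh g*fb (2*y)*fb (x-y)*fa g (y+z)*fa g (x+z) = 0"
    unfolding fa_def fb_def by (simp only: sinh_exp_simps) (simp add: field_simps)
  show ?thesis
    unfolding coefD_def coefDD_def coefDA_def coefAA_def coefA_def fb_add_gamma fb_double_add_gamma
      add.commute[of z y]
    by (rule coefDA_consistency_field[OF _ _ _ _ _ _ _ _ trig])
      (use generic_pair_nonzero[OF assms(1)] generic_pair_nonzero[OF assms(2)]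
        generic_pair_nonzero[OF assms(3)] in auto)
qed

section \<open>Exchange relations\<close>

lemma solve_exchange_field:
  fixes P Q X Y a1 a2 b1 b2 c Aw B2 :: complex
  assumes e: "a1 * b2 * Q = a2 * b1 * P + b2 * c * X + c * b1 * Y"
    and T: "B2 = (b2 * Aw + c * b1) / a2"
    and nz: "a2 \<noteq> 0" "b1 \<noteq> 0" "Aw \<noteq> 0"
  shows "P = a1 * b2 / (b1 * a2) * Q + c * B2 / ((- b1) * Aw) * X + (- c / a2) * (Y - c / Aw * X)"
proof -
  have P: "P = (a1 * b2 * Q - b2 * c * X - c * b1 * Y) / (a2 * b1)"
    using e nz by (simp add: field_simps)
  show ?thesis unfolding P T using nz by (simp add: field_simps)
qed

lemma solve_exchange:
  fixes P Q X Y x y g :: complex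
  assumes e: "fa g (y-x) * fb (y+x) * Q = fa g (y+x) * fb (y-x) * P + fb (y+x) * sinh g * X + sinh g * fb (y-x) * Y"
    and nz: "fb (x-y) \<noteq> 0" "fa g (x+y) \<noteq> 0" "fa g (2*y) \<noteq> 0"
  shows "P = coefA g x y * Q + coefAA g x y * X + coefAD g x y * (Y - sinh g / fa g (2*y) * X)"
proof -
  have n: "fb (y-x) \<noteq> 0" "fa g (y+x) \<noteq> 0" using nz fb_minus[of y x] by (simp_all add: add.commute)
  have "fb (2*y) * fa g (y+x) = fb (y+x) * fa g (2*y) + sinh g * fb (y-x)"
    unfolding fa_def fb_def by (simp only: sinh_exp_simps) (simp add: field_simps)
  then have "fb (2*y) = (fb (y+x) * fa g (2*y) + sinh g * fb (y-x)) / fa g (y+x)"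
    using n by (simp add: eq_divide_eq)
  from solve_exchange_field[OF e this n(2,1) nz(3)] show ?thesis
    unfolding coefA_def coefAA_def coefAD_def fb_minus[of y x] by (simp add: add.commute)
qed

lemma solve_exchange_Dt_field:
  fixes c Axy Amy Bmy Bpy A2x A2y B2x B2y Ag2x Agxy Ayx P P' Z U1 U2 U3 U4 :: complex
  assumes n: "Bmy \<noteq> 0" "Bpy \<noteq> 0" "Axy \<noteq> 0" "A2x \<noteq> 0" "A2y \<noteq> 0"
  and K: "c*A2x + Bmy*Bpy = Axy*Amy"
  and J1: "Axy*Axy - c*c = Agxy*Bpy"
  and J2: "Axy*A2x - c*Amy = Bpy*Ag2x"
  and J3: "-c*B2x*Axy + c*c*Bmy + Ayx*Bpy*Axy + Bpy*Agxy*Bmy = 0"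
  and J4: "Amy*Amy*Bpy*A2x*A2y - Axy*Amy*(c*B2y*Axy + c*c*Bmy) - Bmy*Bpy*(c*Ag2x*Axy + B2y*Ag2x*Bmy) = 0"
  and E: "c*c*P + c*Axy*U3 + Bmy*Bpy*Z = c*Amy*P' + Axy*Amy*U4"
  and AB1: "P = (Ayx*Bpy/((-Bmy)*Axy))*U1 + (c*B2y/(Bmy*A2y))*U2 + (-c/Axy)*(U3 - c/A2y*U2)"
  and AB2: "P' = (Amy*Bpy/(Bmy*Axy))*U2 + (c*B2x/((-Bmy)*A2x))*U1 + (-c/Axy)*(U4 - c/A2x*U1)"
  shows "Z - c/A2x*P = (Amy*Agxy/(Bmy*Axy))*(U4 - c/A2x*U1) + (-c*Ag2x/(A2x*Bmy))*(U3 - c/A2y*U2)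
           + (c*B2y*Ag2x/(A2x*A2y*Axy))*U2"
proof -
  define Q where "Q = Bmy*Bpy"
  have Qn: "Q \<noteq> 0" using n by (simp add: Q_def)
  have Z: "Z = (c*Amy*P' + Axy*Amy*U4 - c*c*P - c*Axy*U3) / Q"
    using E Qn unfolding Q_def by (simp add: field_simps)
  define P1 where "P1 = Ayx*Bpy/((-Bmy)*Axy)"
  define P2 where "P2 = c*B2y/(Bmy*A2y) + (-c/Axy)*(- c/A2y)"
  define P3 where "P3 = -c/Axy"
  define Q2 where "Q2 = Amy*Bpy/(Bmy*Axy)"
  define Q1 where "Q1 = c*B2x/((-Bmy)*A2x) + (-c/Axy)*(- c/A2x)"
  define Q4 where "Q4 = -c/Axy"
  have AB1': "P = P1*U1 + P2*U2 + P3*U3"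
    unfolding AB1 P1_def P2_def P3_def by (simp add: algebra_simps)
  have AB2': "P' = Q1*U1 + Q2*U2 + Q4*U4"
    unfolding AB2 Q1_def Q2_def Q4_def by (simp add: algebra_simps)
  have lhs: "Z - c/A2x*P = ((c*Amy*Q1 - c*c*P1 - Q*c/A2x*P1)/Q)*U1 + ((c*Amy*Q2 - c*c*P2 - Q*c/A2x*P2)/Q)*U2
        + ((- c*c*P3 - c*Axy - Q*c/A2x*P3)/Q)*U3 + ((c*Amy*Q4 + Axy*Amy)/Q)*U4"
    unfolding Z AB1' AB2' using Qn n by (simp add: field_simps)
  have c4: "(c*Amy*Q4 + Axy*Amy)/Q = Amy*Agxy/(Bmy*Axy)"
    unfolding Q4_def Q_def using n J1 by (simp add: field_simps)
  have c3: "(- c*c*P3 - c*Axy - Q*c/A2x*P3)/Q = -c*Ag2x/(A2x*Bmy)"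
    unfolding P3_def Q_def using n
    apply (simp add: field_simps)
    using K J2 by algebra
  have c1: "(c*Amy*Q1 - c*c*P1 - Q*c/A2x*P1)/Q = - (Amy*Agxy/(Bmy*Axy))*(c/A2x)"
    unfolding P1_def Q1_def Q_def using n
    apply (simp add: field_simps)
    using K J3 by algebra
  have c2: "(c*Amy*Q2 - c*c*P2 - Q*c/A2x*P2)/Q = (-c*Ag2x/(A2x*Bmy))*(-c/A2y) + c*B2y*Ag2x/(A2x*A2y*Axy)"
    unfolding P2_def Q2_def Q_def using n
    apply (simp add: field_simps)
    using K J4 by algebra
  show ?thesis
    unfolding lhs c1 c2 c3 c4 using n by (simp add: field_simps)
qed

lemma fa_add_mul_fa_diff: "sinh g * fa g (2*x) + fb (x-y) * fb (x+y) = fa g (x+y) * fa g (x-y)"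
  unfolding fa_def fb_def by (simp only: sinh_exp_simps) (simp add: field_simps)

lemma solve_exchange_Dt_trig:
  "fa g (x+y) * fa g (x+y) - sinh g * sinh g = fa g (x+y+g) * fb (x+y)"
  "fa g (x+y) * fa g (2*x) - sinh g * fa g (x-y) = fb (x+y) * fa g (2*x+g)"
  "- sinh g * fb (2*x) * fa g (x+y) + sinh g * sinh g * fb (x-y) + fa g (y-x) * fb (x+y) * fa g (x+y)
     + fb (x+y) * fa g (x+y+g) * fb (x-y) = 0"
  "fa g (x-y)*fa g (x-y)*fb (x+y)*fa g (2*x)*fa g (2*y)
     - fa g (x+y)*fa g (x-y)*(sinh g*fb (2*y)*fa g (x+y) + sinh g*sinh g*fb (x-y))
     - fb (x-y)*fb (x+y)*(sinh g*fa g (2*x+g)*fa g (x+y) + fb (2*y)*fa g (2*x+g)*fb (x-y)) = 0"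
  unfolding fa_def fb_def by (simp only: sinh_exp_simps; simp add: field_simps)+

text \<open>The relation for \<open>D\<^sup>~\<close> is first derived under the extra condition \<open>fb (x + y) \<noteq> 0\<close>,
  needed to solve the reflection equation for it; clearing denominators yields an identity
  between continuous functions of \<open>x\<close>, which therefore survives at the excluded points.\<close>

lemma Dt_exchange_by_continuity:
  fixes Dl Al Dw Aw Du Au :: "complex \<Rightarrow> complex"
  assumes cont: "continuous_on UNIV Dl" "continuous_on UNIV Al" "continuous_on UNIV Dw"
      "continuous_on UNIV Aw" "continuous_on UNIV Du" "continuous_on UNIV Au"
    and gen: "generic_pair g x y"
    and rel: "\<And>z. generic_pair g z y \<Longrightarrow> fb (z + y) \<noteq> 0 \<Longrightarrow>
       Dl z - sinh g / fa g (2*z) * Al z = coefD g z y * (Dw z - sinh g / fa g (2*z) * Aw z)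
         + coefDD g z y * (Du z - sinh g / fa g (2*y) * Au z) + coefDA g z y * Au z"
  shows "Dl x - sinh g / fa g (2*x) * Al x = coefD g x y * (Dw x - sinh g / fa g (2*x) * Aw x)
         + coefDD g x y * (Du x - sinh g / fa g (2*y) * Au x) + coefDA g x y * Au x"
proof -
  define R where "R z = Dl z - sinh g / fa g (2*z) * Al z - (coefD g z y * (Dw z - sinh g / fa g (2*z) * Aw z)
         + coefDD g z y * (Du z - sinh g / fa g (2*y) * Au z) + coefDA g z y * Au z)" for z
  define clr where "clr z = fb (z-y)*fa g (z+y)*(fa g (2*z)*Dl z - sinh g*Al z)
     - fa g (z-y)*fa g (z+y+g)*(fa g (2*z)*Dw z - sinh g*Aw z)
     + sinh g*fa g (2*z+g)*fa g (z+y)*(Du z - sinh g/fa g (2*y)*Au z)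
     - sinh g*fb (2*y)/fa g (2*y)*fa g (2*z+g)*fb (z-y) * Au z" for z
  have clr: "clr z = fa g (2*z)*fb (z-y)*fa g (z+y) * R z" if "generic_pair g z y" for z
    unfolding R_def clr_def coefD_def coefDD_def coefDA_def fb_add_gamma fb_double_add_gamma
    using generic_pair_nonzero[OF that] by (simp add: field_simps)
  have a2y: "fa g (2*y) \<noteq> 0" using gen unfolding generic_pair_def by simp
  have "clr x = 0"
  proof (rule continuous_zero_off_sinh_zeros[where f = clr and ps = "[(1, -y), (1, y+g), (2, g), (1, y)]"])
    show "continuous_on UNIV clr"
      unfolding clr_def fa_def fb_def by (intro continuous_intros cont)
  next
    fix z assume "\<forall>(k, c)\<in>set [(1::real, -y), (1, y+g), (2, g), (1, y)]. sinh (complex_of_real k * z + c) \<noteq> 0"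
    then have n: "fb (z-y) \<noteq> 0" "fa g (z+y) \<noteq> 0" "fa g (2*z) \<noteq> 0" "fb (z+y) \<noteq> 0"
      by (simp_all add: fa_def fb_def algebra_simps)
    then have "generic_pair g z y" unfolding generic_pair_def using a2y by simp
    then show "clr z = 0" using clr rel[OF _ n(4)] unfolding R_def by simp
  qed simp
  then have "R x = 0" using clr[OF gen] generic_pair_nonzero[OF gen] by simp
  then show ?thesis unfolding R_def by simp
qed

definition Dtilde :: "complex \<Rightarrow> complex \<Rightarrow> complex list \<Rightarrow> complex \<Rightarrow> qvec \<Rightarrow> qvec" where
  "Dtilde g h mu x w = (\<lambda>s. Top g h mu 1 1 x w s - sinh g / fa g (2*x) * Top g h mu 0 0 x w s)"

lemma Top_Dtilde: "Top g h mu i j z (Dtilde g h mu x w) s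
   = Top g h mu i j z (Top g h mu 1 1 x w) s - sinh g / fa g (2*x) * Top g h mu i j z (Top g h mu 0 0 x w) s"
  using Top_linear[of g h mu i j z 1 "Top g h mu 1 1 x w" "- (sinh g / fa g (2*x))" "Top g h mu 0 0 x w"]
  by (simp add: Dtilde_def)

context
  fixes g h :: complex and mu :: "complex list"
begin

abbreviation "TA x w \<equiv> Top g h mu 0 0 x w"
abbreviation "TB x w \<equiv> Top g h mu 0 1 x w"
abbreviation "TC x w \<equiv> Top g h mu 1 0 x w"
abbreviation "TD x w \<equiv> Top g h mu 1 1 x w"
abbreviation "TDt x w \<equiv> Dtilde g h mu x w"

lemma reflection_entry_0010: "length mu \<le> length s \<Longrightarrow>
  fa g (l-m) * fb (l+m) * TB l (TA m w) s = fa g (l+m) * fb (l-m) * TA m (TB l w) s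
     + fb (l+m) * sinh g * TB m (TA l w) s + sinh g * fb (l-m) * TB m (TD l w) s"
  using reflection_equation_entry[of 0 0 1 0 mu s g l m h w] by (simp add: Rmat_def algebra_simps)

lemma reflection_entry_1000: "length mu \<le> length s \<Longrightarrow>
  sinh g * fb (l+m) * TA l (TC m w) s + fb (l-m) * fa g (l+m) * TC l (TA m w) s
     + fb (l-m) * sinh g * TD l (TC m w) s = fb (l+m) * fa g (l-m) * TA m (TC l w) s"
  using reflection_equation_entry[of 1 0 0 0 mu s g l m h w] by (simp add: Rmat_def algebra_simps)

lemma reflection_entry_0011: "length mu \<le> length s \<Longrightarrow>
  fa g (l-m) * fb (l+m) * TB l (TB m w) s = fb (l+m) * fa g (l-m) * TB m (TB l w) s"
  using reflection_equation_entry[of 0 0 1 1 mu s g l m h w] by (simp add: Rmat_def algebra_simps)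

lemma reflection_entry_1100: "length mu \<le> length s \<Longrightarrow>
  fa g (l-m) * fb (l+m) * TC l (TC m w) s = fb (l+m) * fa g (l-m) * TC m (TC l w) s"
  using reflection_equation_entry[of 1 1 0 0 mu s g l m h w] by (simp add: Rmat_def algebra_simps)

lemma reflection_entry_1011: "length mu \<le> length s \<Longrightarrow>
  sinh g * sinh g * TA l (TB m w) s + sinh g * fa g (l+m) * TB l (TD m w) s
    + fb (l-m) * fb (l+m) * TD l (TB m w) s
  = sinh g * fa g (l-m) * TA m (TB l w) s + fa g (l+m) * fa g (l-m) * TB m (TD l w) s"
  using reflection_equation_entry[of 1 0 1 1 mu s g l m h w] by (simp add: Rmat_def algebra_simps)

lemma reflection_entry_1110: "length mu \<le> length s \<Longrightarrow>
  fa g (l-m) * sinh g * TC l (TA m w) s + fa g (l-m) * fa g (l+m) * TD l (TC m w) s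
  = sinh g * sinh g * TC m (TA l w) s + fb (l+m) * fb (l-m) * TC m (TD l w) s
    + fa g (l+m) * sinh g * TD m (TC l w) s"
  using reflection_equation_entry[of 1 1 1 0 mu s g l m h w] by (simp add: Rmat_def algebra_simps)

lemma exchange_AB:
  assumes gen: "generic_pair g x y" and len: "length mu \<le> length s"
  shows "TA x (TB y w) s = coefA g x y * TB y (TA x w) s + coefAA g x y * TB x (TA y w) s
     + coefAD g x y * TB x (TDt y w) s"
  using solve_exchange[OF reflection_entry_0010[OF len, of y x w]]
    generic_pair_nonzero[OF gen] unfolding Top_Dtilde by simp

lemma exchange_CA:
  assumes gen: "generic_pair g x y" and len: "length mu \<le> length s"
  shows "TC y (TA x w) s = coefA g x y * TA x (TC y w) s + coefAA g x y * TA y (TC x w) s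
     + coefAD g x y * TDt y (TC x w) s"
proof -
  have "fa g (y-x) * fb (y+x) * TA x (TC y w) s = fa g (y+x) * fb (y-x) * TC y (TA x w) s
     + fb (y+x) * sinh g * TA y (TC x w) s + sinh g * fb (y-x) * TD y (TC x w) s"
    using reflection_entry_1000[OF len, of y x w] by (simp add: algebra_simps)
  from solve_exchange[OF this] show ?thesis
    using generic_pair_nonzero[OF gen] unfolding Dtilde_def by simp
qed

lemma B_commute:
  assumes "length mu \<le> length s"
  shows "TB x (TB y w) s = TB y (TB x w) s"
  by (rule eq_by_continuity_off_sinh_zeros[where g = g and y = y
        and P = "\<lambda>x. TB x (TB y w) s" and Q = "\<lambda>x. TB y (TB x w) s"])
    (use reflection_entry_0011[OF assms] in \<open>auto intro!: continuous_intros\<close>)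

lemma C_commute:
  assumes "length mu \<le> length s"
  shows "TC x (TC y w) s = TC y (TC x w) s"
  by (rule eq_by_continuity_off_sinh_zeros[where g = g and y = y
        and P = "\<lambda>x. TC x (TC y w) s" and Q = "\<lambda>x. TC y (TC x w) s"])
    (use reflection_entry_1100[OF assms] in \<open>auto intro!: continuous_intros\<close>)

lemma exchange_DB_generic:
  assumes gen: "generic_pair g x y" and bp: "fb (x+y) \<noteq> 0" and len: "length mu \<le> length s"
  shows "TD x (TB y w) s - sinh g / fa g (2*x) * TA x (TB y w) s
       = coefD g x y * (TB y (TD x w) s - sinh g / fa g (2*x) * TB y (TA x w) s)
       + coefDD g x y * (TB x (TD y w) s - sinh g / fa g (2*y) * TB x (TA y w) s)
       + coefDA g x y * TB x (TA y w) s"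
proof -
  note n = generic_pair_nonzero[OF gen]
  have AB1: "TA x (TB y w) s = (fa g (y-x)*fb (x+y)/((-fb (x-y))*fa g (x+y))) * TB y (TA x w) s
     + (sinh g*fb (2*y)/(fb (x-y)*fa g (2*y))) * TB x (TA y w) s
     + (- sinh g/fa g (x+y)) * (TB x (TD y w) s - sinh g / fa g (2*y) * TB x (TA y w) s)"
    using exchange_AB[OF gen len, of w]
    unfolding coefA_def coefAA_def coefAD_def Top_Dtilde fb_minus[of y x] .
  have AB2: "TA y (TB x w) s = (fa g (x-y)*fb (x+y)/(fb (x-y)*fa g (x+y))) * TB x (TA y w) s
     + (sinh g*fb (2*x)/((-fb (x-y))*fa g (2*x))) * TB y (TA x w) s
     + (- sinh g/fa g (x+y)) * (TB y (TD x w) s - sinh g / fa g (2*x) * TB y (TA x w) s)"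
    using exchange_AB[OF generic_pair_sym[OF gen] len, of w]
    unfolding coefA_def coefAA_def coefAD_def Top_Dtilde fb_minus[of y x] add.commute[of y x] .
  have "TD x (TB y w) s - sinh g/fa g (2*x) * TA x (TB y w) s
    = (fa g (x-y)*fa g (x+y+g)/(fb (x-y)*fa g (x+y)))*(TB y (TD x w) s - sinh g/fa g (2*x)*TB y (TA x w) s)
     + (-sinh g*fa g (2*x+g)/(fa g (2*x)*fb (x-y)))*(TB x (TD y w) s - sinh g/fa g (2*y)*TB x (TA y w) s)
     + (sinh g*fb (2*y)*fa g (2*x+g)/(fa g (2*x)*fa g (2*y)*fa g (x+y)))*TB x (TA y w) s"
    by (rule solve_exchange_Dt_field[OF n(1) bp n(3) n(5) n(6) fa_add_mul_fa_diff
          solve_exchange_Dt_trig reflection_entry_1011[OF len] AB1 AB2])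
  then show ?thesis
    unfolding coefD_def coefDD_def coefDA_def fb_add_gamma fb_double_add_gamma by simp
qed

lemma exchange_DB:
  assumes gen: "generic_pair g x y" and len: "length mu \<le> length s"
  shows "TDt x (TB y w) s = coefD g x y * TB y (TDt x w) s + coefDD g x y * TB x (TDt y w) s
     + coefDA g x y * TB x (TA y w) s"
proof -
  have "TD x (TB y w) s - sinh g / fa g (2*x) * TA x (TB y w) s
       = coefD g x y * (TB y (TD x w) s - sinh g / fa g (2*x) * TB y (TA x w) s)
       + coefDD g x y * (TB x (TD y w) s - sinh g / fa g (2*y) * TB x (TA y w) s)
       + coefDA g x y * TB x (TA y w) s"
    by (rule Dt_exchange_by_continuity[where Dl = "\<lambda>z. TD z (TB y w) s" and Al = "\<lambda>z. TA z (TB y w) s"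
          and Dw = "\<lambda>z. TB y (TD z w) s" and Aw = "\<lambda>z. TB y (TA z w) s"
          and Du = "\<lambda>z. TB z (TD y w) s" and Au = "\<lambda>z. TB z (TA y w) s", OF _ _ _ _ _ _ gen exchange_DB_generic[OF _ _ len]])
      (intro continuous_intros)+
  then show ?thesis
    unfolding Top_Dtilde by (simp add: Dtilde_def)
qed

lemma exchange_CD_generic:
  assumes gen: "generic_pair g x y" and bp: "fb (x+y) \<noteq> 0" and len: "length mu \<le> length s"
  shows "TC y (TD x w) s - sinh g / fa g (2*x) * TC y (TA x w) s
       = coefD g x y * (TD x (TC y w) s - sinh g / fa g (2*x) * TA x (TC y w) s)
       + coefDD g x y * (TD y (TC x w) s - sinh g / fa g (2*y) * TA y (TC x w) s)
       + coefDA g x y * TA y (TC x w) s"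
proof -
  note n = generic_pair_nonzero[OF gen]
  have E: "sinh g * sinh g * TC y (TA x w) s + sinh g * fa g (x+y) * TD y (TC x w) s
    + fb (x-y) * fb (x+y) * TC y (TD x w) s
    = sinh g * fa g (x-y) * TC x (TA y w) s + fa g (x+y) * fa g (x-y) * TD x (TC y w) s"
    using reflection_entry_1110[OF len, of x y w] by (simp add: algebra_simps)
  have AB1: "TC y (TA x w) s = (fa g (y-x)*fb (x+y)/((-fb (x-y))*fa g (x+y))) * TA x (TC y w) s
     + (sinh g*fb (2*y)/(fb (x-y)*fa g (2*y))) * TA y (TC x w) s
     + (- sinh g/fa g (x+y)) * (TD y (TC x w) s - sinh g / fa g (2*y) * TA y (TC x w) s)"
    using exchange_CA[OF gen len, of w]
    unfolding coefA_def coefAA_def coefAD_def Dtilde_def fb_minus[of y x] .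
  have AB2: "TC x (TA y w) s = (fa g (x-y)*fb (x+y)/(fb (x-y)*fa g (x+y))) * TA y (TC x w) s
     + (sinh g*fb (2*x)/((-fb (x-y))*fa g (2*x))) * TA x (TC y w) s
     + (- sinh g/fa g (x+y)) * (TD x (TC y w) s - sinh g / fa g (2*x) * TA x (TC y w) s)"
    using exchange_CA[OF generic_pair_sym[OF gen] len, of w]
    unfolding coefA_def coefAA_def coefAD_def Dtilde_def fb_minus[of y x] add.commute[of y x] .
  have "TC y (TD x w) s - sinh g/fa g (2*x) * TC y (TA x w) s
    = (fa g (x-y)*fa g (x+y+g)/(fb (x-y)*fa g (x+y)))*(TD x (TC y w) s - sinh g/fa g (2*x)*TA x (TC y w) s)
     + (-sinh g*fa g (2*x+g)/(fa g (2*x)*fb (x-y)))*(TD y (TC x w) s - sinh g/fa g (2*y)*TA y (TC x w) s)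
     + (sinh g*fb (2*y)*fa g (2*x+g)/(fa g (2*x)*fa g (2*y)*fa g (x+y)))*TA y (TC x w) s"
    by (rule solve_exchange_Dt_field[OF n(1) bp n(3) n(5) n(6) fa_add_mul_fa_diff
          solve_exchange_Dt_trig E AB1 AB2])
  then show ?thesis
    unfolding coefD_def coefDD_def coefDA_def fb_add_gamma fb_double_add_gamma by simp
qed

lemma exchange_CD:
  assumes gen: "generic_pair g x y" and len: "length mu \<le> length s"
  shows "TC y (TDt x w) s = coefD g x y * TDt x (TC y w) s + coefDD g x y * TDt y (TC x w) s
     + coefDA g x y * TA y (TC x w) s"
proof -
  have "TC y (TD x w) s - sinh g / fa g (2*x) * TC y (TA x w) s
       = coefD g x y * (TD x (TC y w) s - sinh g / fa g (2*x) * TA x (TC y w) s)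
       + coefDD g x y * (TD y (TC x w) s - sinh g / fa g (2*y) * TA y (TC x w) s)
       + coefDA g x y * TA y (TC x w) s"
    by (rule Dt_exchange_by_continuity[where Dl = "\<lambda>z. TC y (TD z w) s" and Al = "\<lambda>z. TC y (TA z w) s"
          and Dw = "\<lambda>z. TD z (TC y w) s" and Aw = "\<lambda>z. TA z (TC y w) s"
          and Du = "\<lambda>z. TD y (TC z w) s" and Au = "\<lambda>z. TA y (TC z w) s", OF _ _ _ _ _ _ gen exchange_CD_generic[OF _ _ len]])
      (intro continuous_intros)+
  then show ?thesis
    unfolding Top_Dtilde by (simp add: Dtilde_def)
qed

end

section \<open>Action on the vacuum\<close>

text \<open>Every operator conserves the charge: the number of flipped spins in all spaces,
  auxiliary state \<open>1\<close> counting as flipped.\<close>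

definition charge_agree :: "nat \<Rightarrow> nat \<Rightarrow> avec \<Rightarrow> avec \<Rightarrow> bool" where
  "charge_agree n q v w \<longleftrightarrow> (\<forall>a s. length s = n \<longrightarrow> a + sum_list s = q \<longrightarrow> v a s = w a s)"

definition charge_preserving :: "nat \<Rightarrow> (avec \<Rightarrow> avec) \<Rightarrow> bool" where
  "charge_preserving n F \<longleftrightarrow> (\<forall>q v w. charge_agree n q v w \<longrightarrow> charge_agree n q (F v) (F w))"

lemma Rmat_charge: "Rmat g x i j k l \<noteq> 0 \<Longrightarrow> i + j = k + l"
  unfolding Rmat_def by (auto split: if_splits)

lemma charge_preserving_Rop:
  assumes "p < n"
  shows "charge_preserving n (Rop g x p)"
  unfolding charge_preserving_def charge_agree_def
proof (intro allI impI)
  fix q :: nat and v w :: avec and a :: nat and s :: "nat list"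
  assume H: "\<forall>a s. length s = n \<longrightarrow> a + sum_list s = q \<longrightarrow> v a s = w a s"
    and l: "length s = n" and qs: "a + sum_list s = q"
  have "Rmat g x a (s!p) t0 t * v t0 (s[p:=t]) = Rmat g x a (s!p) t0 t * w t0 (s[p:=t])" for t0 t
  proof (cases "Rmat g x a (s!p) t0 t = 0")
    case False
    have p: "p < length s" using assms l by simp
    have "t0 + sum_list (s[p:=t]) = q"
      using Rmat_charge[OF False] qs sum_list_update[OF p, of t] elem_le_sum_list[OF p] by linarith
    then show ?thesis using H l by simp
  qed simp
  then show "Rop g x p v a s = Rop g x p w a s" unfolding Rop_def by (simp only:)
qed

lemma charge_preserving_comp:
  "charge_preserving n F \<Longrightarrow> charge_preserving n G \<Longrightarrow> charge_preserving n (F \<circ> G)"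
  unfolding charge_preserving_def by simp

lemma charge_preserving_DRop:
  assumes "length mu \<le> n"
  shows "charge_preserving n (DRop g h mu x)"
proof (rule DRop_closure[where P = "charge_preserving n"])
  show "charge_preserving n (F \<circ> G)" if "charge_preserving n F" "charge_preserving n G" for F G
    using that by (rule charge_preserving_comp)
  show "charge_preserving n (Rop g y p)" if "p < length mu" for y p
    using that assms by (intro charge_preserving_Rop) simp
qed (auto simp: charge_preserving_def charge_agree_def Kop_def)

lemma DRop_charge_agree:
  "length mu \<le> length s \<Longrightarrow> charge_agree (length s) (a + sum_list s) v w \<Longrightarrow>
   DRop g h mu x v a s = DRop g h mu x w a s"
  using charge_preserving_DRop[of mu "length s" g h x] unfolding charge_preserving_def charge_agree_def
  by blast

lemma sum_list_eq_0_iff_replicate: "sum_list (s::nat list) = 0 \<longleftrightarrow> s = replicate (length s) 0"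
  by (induction s) auto

lemma Top_diag_vac_off_vacuum:
  assumes len: "length s = length mu" and nz: "s \<noteq> replicate (length mu) 0"
  shows "Top g h mu i i x (vac (length mu)) s = 0"
proof -
  have "sum_list s \<noteq> 0" using nz len sum_list_eq_0_iff_replicate[of s] by simp
  then have "DRop g h mu x (\<lambda>t0 t. if t0 = i then vac (length mu) t else 0) i s = DRop g h mu x (\<lambda>a s. 0) i s"
    using len by (intro DRop_charge_agree) (auto simp: charge_agree_def vac_def sum_list_replicate)
  then show ?thesis unfolding Top_def by (simp add: linear_op_zero[OF linear_op_DRop])
qed

lemma Top_offdiag_vac_on_vacuum:
  assumes "length mu \<le> length s" "i \<noteq> j" "i \<le> 1" "j \<le> 1" "sum_list s = 0"
  shows "Top g h mu i j x (vac (length mu)) s = 0"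
proof -
  have "DRop g h mu x (\<lambda>t0 t. if t0 = j then vac (length mu) t else 0) i s = DRop g h mu x (\<lambda>a s. 0) i s"
    using assms by (intro DRop_charge_agree)
      (auto simp: charge_agree_def vac_def sum_list_replicate simp del: sum_list_eq_0_iff)
  then show ?thesis unfolding Top_def by (simp add: linear_op_zero[OF linear_op_DRop])
qed

lemma Top_diag_on_vacuum:
  assumes "i \<le> 1"
  shows "Top g h mu i i x w (replicate (length mu) 0)
       = w (replicate (length mu) 0) * Top g h mu i i x (vac (length mu)) (replicate (length mu) 0)"
proof -
  let ?z = "replicate (length mu) 0"
  have "DRop g h mu x (\<lambda>t0 t. if t0 = i then w t else 0) i ?z
      = DRop g h mu x (\<lambda>t0 t. if t0 = i then w ?z * vac (length mu) t else 0) i ?z"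
    by (intro DRop_charge_agree)
      (auto simp: charge_agree_def vac_def sum_list_replicate simp del: sum_list_eq_0_iff
        dest: sum_list_eq_0_iff_replicate[THEN iffD1])
  then have "Top g h mu i i x w ?z = Top g h mu i i x (\<lambda>t. w ?z * vac (length mu) t) ?z"
    unfolding Top_def by simp
  then show ?thesis by (simp add: Top_scale)
qed

definition acts_on_prefix :: "nat \<Rightarrow> (avec \<Rightarrow> avec) \<Rightarrow> bool" where
  "acts_on_prefix n F \<longleftrightarrow> (\<forall>v a s t. length s = n \<longrightarrow> F v a (s @ [t]) = F (\<lambda>a' s'. v a' (s' @ [t])) a s)"

lemma acts_on_prefix_comp:
  assumes F: "acts_on_prefix n F" "length_local F" and G: "acts_on_prefix n G"
  shows "acts_on_prefix n (F \<circ> G)"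
  unfolding acts_on_prefix_def
proof (intro allI impI)
  fix v :: avec and a :: nat and s :: "nat list" and t :: nat
  assume l: "length s = n"
  have "F (G v) a (s @ [t]) = F (\<lambda>a' s'. G v a' (s' @ [t])) a s"
    using F(1) l unfolding acts_on_prefix_def by blast
  also have "\<dots> = F (G (\<lambda>a' s'. v a' (s' @ [t]))) a s"
    using G l unfolding acts_on_prefix_def by (intro length_localD[OF F(2)]) auto
  finally show "(F \<circ> G) v a (s @ [t]) = (F \<circ> G) (\<lambda>a' s'. v a' (s' @ [t])) a s" by simp
qed

lemma DRop_snoc_site:
  assumes "length mu \<le> length s"
  shows "DRop g h mu x v a (s @ [t]) = DRop g h mu x (\<lambda>a' s'. v a' (s' @ [t])) a s"
proof -
  have "acts_on_prefix (length s) (DRop g h mu x) \<and> length_local (DRop g h mu x)"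
  proof (rule DRop_closure[where P = "\<lambda>F. acts_on_prefix (length s) F \<and> length_local F"])
    show "acts_on_prefix (length s) (F \<circ> G) \<and> length_local (F \<circ> G)"
      if "acts_on_prefix (length s) F \<and> length_local F" "acts_on_prefix (length s) G \<and> length_local G"
      for F G using that by (simp add: acts_on_prefix_comp length_local_comp)
    show "acts_on_prefix (length s) (Rop g y p) \<and> length_local (Rop g y p)" if "p < length mu" for y p
      using that assms by (simp add: acts_on_prefix_def length_local_Rop Rop_def nth_append list_update_append)
  qed (simp_all add: acts_on_prefix_def length_local_def Kop_def)
  then show ?thesis unfolding acts_on_prefix_def by blast
qed

definition vev_A :: "complex \<Rightarrow> complex \<Rightarrow> complex list \<Rightarrow> complex \<Rightarrow> complex" where
  "vev_A g h mu x = Top g h mu 0 0 x (vac (length mu)) (replicate (length mu) 0)"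

definition vev_D :: "complex \<Rightarrow> complex \<Rightarrow> complex list \<Rightarrow> complex \<Rightarrow> complex" where
  "vev_D g h mu x = Top g h mu 1 1 x (vac (length mu)) (replicate (length mu) 0)"

lemma Top_vac_snoc:
  assumes ij: "i \<le> 1" "j \<le> 1"
  shows "Top g h (mu @ [m]) i j x (vac (Suc (length mu))) (replicate (Suc (length mu)) 0)
    = (\<Sum>t0\<in>{0,1}. \<Sum>t\<in>{0,1}. Rmat g (x-m) i 0 t0 t *
         (\<Sum>e\<in>{0,1}. Rmat g (x+m) e t j 0 * Top g h mu t0 e x (vac (length mu)) (replicate (length mu) 0)))"
proof -
  let ?L = "length mu" let ?z = "replicate ?L (0::nat)"
  define Vj :: avec where "Vj = (\<lambda>t0 t. if t0 = j then vac (Suc ?L) t else 0)"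
  define W where "W = DRop g h mu x (Rop g (x+m) ?L Vj)"
  have rz: "replicate (Suc ?L) (0::nat) = ?z @ [0]" by (simp add: replicate_append_same)
  have lhs: "Top g h (mu @ [m]) i j x (vac (Suc ?L)) (replicate (Suc ?L) 0)
      = (\<Sum>t0\<in>{0,1}. \<Sum>t\<in>{0,1}. Rmat g (x-m) i 0 t0 t * W t0 (?z @ [t]))"
    unfolding Top_def DRop_snoc W_def Vj_def[symmetric] rz Rop_def
    by (simp add: nth_append list_update_append)
  have vac_snoc: "vac (Suc ?L) (s' @ [u]) = (if u = 0 then vac ?L s' else 0)" if "length s' = ?L" for s' u
    using that unfolding vac_def rz by auto
  have "W t0 (?z @ [t]) = (\<Sum>e\<in>{0,1}. Rmat g (x+m) e t j 0 * Top g h mu t0 e x (vac ?L) ?z)"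
    if t0: "t0 \<le> 1" and "t \<le> 1" for t0 t
  proof -
    have "W t0 (?z @ [t]) = DRop g h mu x (\<lambda>a s'. Rop g (x+m) ?L Vj a (s' @ [t])) t0 ?z"
      unfolding W_def by (rule DRop_snoc_site) simp
    also have "\<dots> = DRop g h mu x (\<lambda>a s'. Rmat g (x+m) a t j 0 * vac ?L s') t0 ?z"
    proof (rule length_localD[OF length_local_DRop, where n = "length mu"])
      fix a and s' :: "nat list" assume "length s' = length mu"
      moreover have "j = 0 \<or> j = 1" using ij(2) by auto
      ultimately show "Rop g (x+m) ?L Vj a (s' @ [t]) = Rmat g (x+m) a t j 0 * vac ?L s'"
        by (auto simp: Rop_def Vj_def nth_append list_update_append vac_snoc)
    qed simp
    also have "\<dots> = (\<Sum>e\<in>{0,1}. Top g h mu t0 e x (\<lambda>s'. Rmat g (x+m) e t j 0 * vac ?L s') ?z)"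
      by (rule DRop_eq_sum_Top[OF t0])
    finally show ?thesis by (simp add: Top_scale)
  qed
  then show ?thesis unfolding lhs by simp
qed

lemma vev_A_snoc: "vev_A g h (mu @ [m]) x = fa g (x-m) * fa g (x+m) * vev_A g h mu x"
  unfolding vev_A_def using Top_vac_snoc[of 0 0 g h mu m x]
  by (simp add: Rmat_def Top_offdiag_vac_on_vacuum[of mu "replicate (length mu) 0"])

lemma vev_D_snoc:
  "vev_D g h (mu @ [m]) x = fb (x-m) * fb (x+m) * vev_D g h mu x + sinh g * sinh g * vev_A g h mu x"
  unfolding vev_A_def vev_D_def using Top_vac_snoc[of 1 1 g h mu m x]
  by (simp add: Rmat_def Top_offdiag_vac_on_vacuum[of mu "replicate (length mu) 0"])

lemma prod_lessThan_snoc: "(\<Prod>j<length (mu @ [m]). f ((mu @ [m]) ! j)) = (\<Prod>j<length mu. f (mu ! j)) * f m"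
proof -
  have "(\<Prod>j<length mu. f ((mu @ [m]) ! j)) = (\<Prod>j<length mu. f (mu ! j))"
    by (rule prod.cong) (auto simp: nth_append)
  then show ?thesis by simp
qed

lemma vev_A_eq_LambdaA: "vev_A g h mu x = LambdaA g h mu x"
proof (induction mu rule: rev_induct)
  case Nil then show ?case
    by (simp add: vev_A_def Top_def DRop_Nil Kop_def vac_def LambdaA_def fb_def)
next
  case (snoc m mu)
  have "(\<Prod>j<length (mu @ [m]). fa g (x - (mu @ [m]) ! j) * fa g (x + (mu @ [m]) ! j))
      = (\<Prod>j<length mu. fa g (x - mu ! j) * fa g (x + mu ! j)) * (fa g (x - m) * fa g (x + m))"
    by (rule prod_lessThan_snoc)
  note prod = this
  show ?case
    unfolding vev_A_snoc snoc LambdaA_def prod by (simp add: algebra_simps)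
qed

lemma vev_D_eq:
  "fa g (2*x) * vev_D g h mu x
   = - fb (2*x) * fa g (x-h) * (\<Prod>j<length mu. fb (x - mu ! j) * fb (x + mu ! j)) + sinh g * LambdaA g h mu x"
proof (induction mu rule: rev_induct)
  case Nil
  have "fa g (2*x) * sinh (h - x) = - fb (2*x) * fa g (x-h) + sinh g * fb (h+x)"
    unfolding fa_def fb_def by (simp only: sinh_exp_simps) (simp add: field_simps)
  then show ?case by (simp add: vev_D_def Top_def DRop_Nil Kop_def vac_def LambdaA_def)
next
  case (snoc m mu)
  let ?P = "\<lambda>mu. \<Prod>j<length mu. fb (x - mu ! j) * fb (x + mu ! j)"
  have "fa g (2*x) * vev_D g h (mu @ [m]) x
     = fb (x-m) * fb (x+m) * (fa g (2*x) * vev_D g h mu x) + sinh g * sinh g * fa g (2*x) * LambdaA g h mu x"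
    by (simp add: vev_D_snoc vev_A_eq_LambdaA algebra_simps)
  also have "\<dots> = - fb (2*x) * fa g (x-h) * ?P (mu @ [m])
      + sinh g * LambdaA g h mu x * (sinh g * fa g (2*x) + fb (x-m) * fb (x+m))"
    unfolding snoc prod_lessThan_snoc[where f = "\<lambda>u. fb (x - u) * fb (x + u)"] by (simp add: algebra_simps)
  also have "\<dots> = - fb (2*x) * fa g (x-h) * ?P (mu @ [m]) + sinh g * LambdaA g h (mu @ [m]) x"
    unfolding fa_add_mul_fa_diff LambdaA_def prod_lessThan_snoc[where f = "\<lambda>u. fa g (x - u) * fa g (x + u)"]
    by (simp add: algebra_simps)
  finally show ?case .
qed

lemma vev_Dtilde_eq_LambdaDt:
  assumes "fa g (2*x) \<noteq> 0"
  shows "vev_D g h mu x - sinh g / fa g (2*x) * vev_A g h mu x = LambdaDt g h mu x"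
proof -
  have "vev_D g h mu x - sinh g / fa g (2*x) * vev_A g h mu x
      = (fa g (2*x) * vev_D g h mu x - sinh g * vev_A g h mu x) / fa g (2*x)"
    using assms by (simp add: field_simps)
  also have "\<dots> = LambdaDt g h mu x"
    unfolding vev_D_eq vev_A_eq_LambdaA LambdaDt_def by simp
  finally show ?thesis .
qed

context
  fixes g h :: complex and mu :: "complex list"
begin

lemma A_vac:
  "length s = length mu \<Longrightarrow> TA g h mu x (vac (length mu)) s = LambdaA g h mu x * vac (length mu) s"
  using Top_diag_vac_off_vacuum[of s mu g h 0 x] vev_A_eq_LambdaA[of g h mu x]
  by (cases "s = replicate (length mu) 0") (simp_all add: vev_A_def vac_def)

lemma Dtilde_vac:
  "fa g (2*x) \<noteq> 0 \<Longrightarrow> length s = length mu \<Longrightarrow>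
   TDt g h mu x (vac (length mu)) s = LambdaDt g h mu x * vac (length mu) s"
  using Top_diag_vac_off_vacuum[of s mu g h 0 x] Top_diag_vac_off_vacuum[of s mu g h 1 x]
    vev_Dtilde_eq_LambdaDt[of g x h mu] vev_A_eq_LambdaA[of g h mu x]
  by (cases "s = replicate (length mu) 0") (simp_all add: Dtilde_def vev_A_def vev_D_def vac_def)

lemma vac_A: "TA g h mu x w (replicate (length mu) 0) = LambdaA g h mu x * w (replicate (length mu) 0)"
  using Top_diag_on_vacuum[of 0 g h mu x w] vev_A_eq_LambdaA[of g h mu x] unfolding vev_A_def by simp

lemma vac_Dtilde:
  "fa g (2*x) \<noteq> 0 \<Longrightarrow>
   TDt g h mu x w (replicate (length mu) 0) = LambdaDt g h mu x * w (replicate (length mu) 0)"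
  using Top_diag_on_vacuum[of 0 g h mu x w] Top_diag_on_vacuum[of 1 g h mu x w]
    vev_Dtilde_eq_LambdaDt[of g x h mu] vev_A_eq_LambdaA[of g h mu x]
  unfolding vev_A_def vev_D_def Dtilde_def by (simp add: algebra_simps)

end

section \<open>The off-shell action of \<open>A\<close> and \<open>D\<^sup>~\<close> on a string of \<open>B\<close>-operators\<close>

text \<open>Coefficients of the unwanted term in which \<open>B(ys ! k)\<close> is replaced by \<open>B(x)\<close>,
  for vacuum eigenvalues \<open>LA\<close> and \<open>LD\<close> of \<open>A\<close> and \<open>D\<^sup>~\<close>.\<close>

definition unwantedA :: "complex \<Rightarrow> (complex \<Rightarrow> complex) \<Rightarrow> (complex \<Rightarrow> complex) \<Rightarrow> complex \<Rightarrow>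
    complex list \<Rightarrow> nat \<Rightarrow> complex" where
  "unwantedA g LA LD x ys k =
     coefAA g x (ys!k) * LA (ys!k) * (\<Prod>j\<in>{..<length ys}-{k}. coefA g (ys!k) (ys!j))
     + coefAD g x (ys!k) * LD (ys!k) * (\<Prod>j\<in>{..<length ys}-{k}. coefD g (ys!k) (ys!j))"

definition unwantedD :: "complex \<Rightarrow> (complex \<Rightarrow> complex) \<Rightarrow> (complex \<Rightarrow> complex) \<Rightarrow> complex \<Rightarrow>
    complex list \<Rightarrow> nat \<Rightarrow> complex" where
  "unwantedD g LA LD x ys k =
     coefDD g x (ys!k) * LD (ys!k) * (\<Prod>j\<in>{..<length ys}-{k}. coefD g (ys!k) (ys!j))
     + coefDA g x (ys!k) * LA (ys!k) * (\<Prod>j\<in>{..<length ys}-{k}. coefA g (ys!k) (ys!j))"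

lemma prod_lessThan_Cons: "(\<Prod>k<length (y # ys). f ((y # ys) ! k)) = f y * (\<Prod>k<length ys. f (ys ! k))"
  by (simp only: length_Cons prod.lessThan_Suc_shift nth_Cons_0 nth_Cons_Suc)

lemma prod_remove_0: "(\<Prod>j\<in>{..<Suc n}-{0}. f j) = (\<Prod>j<n. f (Suc j))"
proof -
  have "{..<Suc n}-{0} = Suc ` {..<n}" by (auto simp: image_iff less_Suc_eq_0_disj)
  then show ?thesis by (simp add: prod.reindex)
qed

lemma prod_remove_Suc: "k < n \<Longrightarrow> (\<Prod>j\<in>{..<Suc n}-{Suc k}. f j) = f 0 * (\<Prod>j\<in>{..<n}-{k}. f (Suc j))"
proof -
  assume "k < n"
  have "{..<Suc n}-{Suc k} = insert 0 (Suc ` ({..<n}-{k}))"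
    by (auto simp: image_iff less_Suc_eq_0_disj)
  then show ?thesis by (simp add: prod.reindex)
qed

lemma del_at_Cons_0: "del_at 0 (y # ys) = ys"
  by (simp add: del_at_def)

lemma del_at_Cons_Suc: "del_at (Suc k) (y # ys) = y # del_at k ys"
  by (simp add: del_at_def)

lemma unwantedA_Cons_0:
  "unwantedA g LA LD x (y # ys) 0 = coefAA g x y * LA y * (\<Prod>k<length ys. coefA g y (ys ! k))
     + coefAD g x y * LD y * (\<Prod>k<length ys. coefD g y (ys ! k))"
  unfolding unwantedA_def by (simp add: prod_remove_0)

lemma unwantedD_Cons_0:
  "unwantedD g LA LD x (y # ys) 0 = coefDD g x y * LD y * (\<Prod>k<length ys. coefD g y (ys ! k))
     + coefDA g x y * LA y * (\<Prod>k<length ys. coefA g y (ys ! k))"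
  unfolding unwantedD_def by (simp add: prod_remove_0)

lemma unwantedA_Cons_Suc:
  assumes k: "k < length ys"
    and gen: "generic_pair g x y" "generic_pair g x (ys ! k)" "generic_pair g y (ys ! k)"
  shows "unwantedA g LA LD x (y # ys) (Suc k) = coefA g x y * unwantedA g LA LD x ys k
     + coefAA g x y * unwantedA g LA LD y ys k + coefAD g x y * unwantedD g LA LD y ys k"
proof -
  let ?z = "ys ! k"
  define PA where "PA = (\<Prod>j\<in>{..<length ys}-{k}. coefA g ?z (ys ! j))"
  define PD where "PD = (\<Prod>j\<in>{..<length ys}-{k}. coefD g ?z (ys ! j))"
  have "unwantedA g LA LD x (y # ys) (Suc k)
      = coefAA g x ?z * LA ?z * (coefA g ?z y * PA) + coefAD g x ?z * LD ?z * (coefD g ?z y * PD)"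
    unfolding unwantedA_def PA_def PD_def using k by (simp add: prod_remove_Suc)
  also have "\<dots> = LA ?z * PA * (coefA g x y * coefAA g x ?z + coefAA g x y * coefAA g y ?z + coefAD g x y * coefDA g y ?z)
        + LD ?z * PD * (coefA g x y * coefAD g x ?z + coefAA g x y * coefAD g y ?z + coefAD g x y * coefDD g y ?z)"
    unfolding coefAA_consistency[OF gen] coefAD_consistency[OF gen] by (simp add: algebra_simps)
  also have "\<dots> = coefA g x y * unwantedA g LA LD x ys k
     + coefAA g x y * unwantedA g LA LD y ys k + coefAD g x y * unwantedD g LA LD y ys k"
    unfolding unwantedA_def unwantedD_def PA_def PD_def by (simp add: algebra_simps)
  finally show ?thesis .
qed

lemma unwantedD_Cons_Suc:
  assumes k: "k < length ys"
    and gen: "generic_pair g x y" "generic_pair g x (ys ! k)" "generic_pair g y (ys ! k)"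
  shows "unwantedD g LA LD x (y # ys) (Suc k) = coefD g x y * unwantedD g LA LD x ys k
     + coefDD g x y * unwantedD g LA LD y ys k + coefDA g x y * unwantedA g LA LD y ys k"
proof -
  let ?z = "ys ! k"
  define PA where "PA = (\<Prod>j\<in>{..<length ys}-{k}. coefA g ?z (ys ! j))"
  define PD where "PD = (\<Prod>j\<in>{..<length ys}-{k}. coefD g ?z (ys ! j))"
  have "unwantedD g LA LD x (y # ys) (Suc k)
      = coefDD g x ?z * LD ?z * (coefD g ?z y * PD) + coefDA g x ?z * LA ?z * (coefA g ?z y * PA)"
    unfolding unwantedD_def PA_def PD_def using k by (simp add: prod_remove_Suc)
  also have "\<dots> = LD ?z * PD * (coefD g x y * coefDD g x ?z + coefDD g x y * coefDD g y ?z + coefDA g x y * coefAD g y ?z)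
        + LA ?z * PA * (coefD g x y * coefDA g x ?z + coefDD g x y * coefDA g y ?z + coefDA g x y * coefAA g y ?z)"
    unfolding coefDD_consistency[OF gen] coefDA_consistency[OF gen] by (simp add: algebra_simps)
  also have "\<dots> = coefD g x y * unwantedD g LA LD x ys k
     + coefDD g x y * unwantedD g LA LD y ys k + coefDA g x y * unwantedA g LA LD y ys k"
    unfolding unwantedA_def unwantedD_def PA_def PD_def by (simp add: algebra_simps)
  finally show ?thesis .
qed

text \<open>The algebraic data needed for the off-shell action, abstracted so that it applies both
  to vectors (action to the right) and to dual vectors (action to the left). The relations are
  only required to hold after applying a functional from \<open>T\<close>.\<close>

locale offshell_action =
  fixes g :: complex
    and A D B :: "complex \<Rightarrow> 'v \<Rightarrow> 'v"
    and LA LD :: "complex \<Rightarrow> complex"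
    and v0 :: 'v
    and V :: "'v set"
    and T :: "('v \<Rightarrow> complex) set"
  assumes vacuum_in: "v0 \<in> V"
    and B_closed: "v \<in> V \<Longrightarrow> B y v \<in> V"
    and functionals_closed: "F \<in> T \<Longrightarrow> (\<lambda>v. F (B y v)) \<in> T"
    and exchange_A: "F \<in> T \<Longrightarrow> v \<in> V \<Longrightarrow> generic_pair g x y \<Longrightarrow>
       F (A x (B y v)) = coefA g x y * F (B y (A x v)) + coefAA g x y * F (B x (A y v))
         + coefAD g x y * F (B x (D y v))"
    and exchange_D: "F \<in> T \<Longrightarrow> v \<in> V \<Longrightarrow> generic_pair g x y \<Longrightarrow>
       F (D x (B y v)) = coefD g x y * F (B y (D x v)) + coefDD g x y * F (B x (D y v))
         + coefDA g x y * F (B x (A y v))"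
    and B_commute: "F \<in> T \<Longrightarrow> v \<in> V \<Longrightarrow> F (B x (B y v)) = F (B y (B x v))"
    and A_vacuum: "F \<in> T \<Longrightarrow> F (A x v0) = LA x * F v0"
    and D_vacuum: "F \<in> T \<Longrightarrow> fa g (2*x) \<noteq> 0 \<Longrightarrow> F (D x v0) = LD x * F v0"
begin

lemma foldr_B_in: "foldr B ys v0 \<in> V"
  by (induction ys) (auto simp: vacuum_in B_closed)

definition expansion_A :: "complex \<Rightarrow> complex list \<Rightarrow> bool" where
  "expansion_A x ys \<longleftrightarrow> (\<forall>F\<in>T. F (A x (foldr B ys v0))
     = LA x * (\<Prod>k<length ys. coefA g x (ys!k)) * F (foldr B ys v0)
       + (\<Sum>k<length ys. unwantedA g LA LD x ys k * F (B x (foldr B (del_at k ys) v0))))"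

definition expansion_D :: "complex \<Rightarrow> complex list \<Rightarrow> bool" where
  "expansion_D x ys \<longleftrightarrow> (\<forall>F\<in>T. F (D x (foldr B ys v0))
     = LD x * (\<Prod>k<length ys. coefD g x (ys!k)) * F (foldr B ys v0)
       + (\<Sum>k<length ys. unwantedD g LA LD x ys k * F (B x (foldr B (del_at k ys) v0))))"

lemma expansion_A_eq:
  "expansion_A x ys \<Longrightarrow> F \<in> T \<Longrightarrow> F (A x (foldr B ys v0))
     = LA x * (\<Prod>k<length ys. coefA g x (ys!k)) * F (foldr B ys v0)
       + (\<Sum>k<length ys. unwantedA g LA LD x ys k * F (B x (foldr B (del_at k ys) v0)))"
  unfolding expansion_A_def by blast

lemma expansion_D_eq:
  "expansion_D x ys \<Longrightarrow> F \<in> T \<Longrightarrow> F (D x (foldr B ys v0))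
     = LD x * (\<Prod>k<length ys. coefD g x (ys!k)) * F (foldr B ys v0)
       + (\<Sum>k<length ys. unwantedD g LA LD x ys k * F (B x (foldr B (del_at k ys) v0)))"
  unfolding expansion_D_def by blast

lemma B_string_Cons_terms:
  assumes "F \<in> T"
  shows "F (B y (B x (foldr B (del_at k ys) v0))) = F (B x (foldr B (del_at (Suc k) (y # ys)) v0))"
    and "F (B x (B y (foldr B (del_at k ys) v0))) = F (B x (foldr B (del_at (Suc k) (y # ys)) v0))"
    and "F (B x (foldr B (del_at 0 (y # ys)) v0)) = F (B x (foldr B ys v0))"
  by (simp_all add: del_at_Cons_0 del_at_Cons_Suc B_commute[OF assms foldr_B_in])

lemma sum_lessThan_length_Cons:
  "(\<Sum>k<length (y # ys). f k) = f 0 + (\<Sum>k<length ys. f (Suc k))"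
  by (simp only: length_Cons sum.lessThan_Suc_shift)

lemma expansion_A_Cons:
  assumes IH: "expansion_A x ys" "expansion_A y ys" "expansion_D y ys"
    and gen: "generic_pair g x y" "\<forall>k<length ys. generic_pair g x (ys!k)"
      "\<forall>k<length ys. generic_pair g y (ys!k)"
  shows "expansion_A x (y # ys)"
  unfolding expansion_A_def
proof
  fix F assume F: "F \<in> T"
  let ?n = "length ys" and ?P = "foldr B ys v0"
  define W where "W k = F (B x (foldr B (del_at (Suc k) (y # ys)) v0))" for k
  have W: "F (B y (B x (foldr B (del_at k ys) v0))) = W k" "F (B x (B y (foldr B (del_at k ys) v0))) = W k"
    for k unfolding W_def by (rule B_string_Cons_terms[OF F])+
  have "F (A x (foldr B (y # ys) v0))
      = coefA g x y * F (B y (A x ?P)) + coefAA g x y * F (B x (A y ?P)) + coefAD g x y * F (B x (D y ?P))"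
    using exchange_A[OF F foldr_B_in gen(1)] by simp
  also have "\<dots> = LA x * (coefA g x y * (\<Prod>k<?n. coefA g x (ys!k))) * F (foldr B (y # ys) v0)
      + (unwantedA g LA LD x (y # ys) 0 * F (B x ?P) + (\<Sum>k<?n. unwantedA g LA LD x (y # ys) (Suc k) * W k))"
    using gen
    by (simp add: expansion_A_eq[OF IH(1) functionals_closed[OF F]] expansion_A_eq[OF IH(2) functionals_closed[OF F]]
        expansion_D_eq[OF IH(3) functionals_closed[OF F]] W unwantedA_Cons_0 unwantedA_Cons_Suc
        sum_distrib_left sum.distrib algebra_simps)
  finally show "F (A x (foldr B (y # ys) v0))
      = LA x * (\<Prod>k<length (y # ys). coefA g x ((y # ys)!k)) * F (foldr B (y # ys) v0)
      + (\<Sum>k<length (y # ys). unwantedA g LA LD x (y # ys) k * F (B x (foldr B (del_at k (y # ys)) v0)))"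
    unfolding prod_lessThan_Cons sum_lessThan_length_Cons B_string_Cons_terms(3)[OF F] by (simp add: W_def)
qed

lemma expansion_D_Cons:
  assumes IH: "expansion_D x ys" "expansion_A y ys" "expansion_D y ys"
    and gen: "generic_pair g x y" "\<forall>k<length ys. generic_pair g x (ys!k)"
      "\<forall>k<length ys. generic_pair g y (ys!k)"
  shows "expansion_D x (y # ys)"
  unfolding expansion_D_def
proof
  fix F assume F: "F \<in> T"
  let ?n = "length ys" and ?P = "foldr B ys v0"
  define W where "W k = F (B x (foldr B (del_at (Suc k) (y # ys)) v0))" for k
  have W: "F (B y (B x (foldr B (del_at k ys) v0))) = W k" "F (B x (B y (foldr B (del_at k ys) v0))) = W k"
    for k unfolding W_def by (rule B_string_Cons_terms[OF F])+
  have "F (D x (foldr B (y # ys) v0))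
      = coefD g x y * F (B y (D x ?P)) + coefDD g x y * F (B x (D y ?P)) + coefDA g x y * F (B x (A y ?P))"
    using exchange_D[OF F foldr_B_in gen(1)] by simp
  also have "\<dots> = LD x * (coefD g x y * (\<Prod>k<?n. coefD g x (ys!k))) * F (foldr B (y # ys) v0)
      + (unwantedD g LA LD x (y # ys) 0 * F (B x ?P) + (\<Sum>k<?n. unwantedD g LA LD x (y # ys) (Suc k) * W k))"
    using gen
    by (simp add: expansion_D_eq[OF IH(1) functionals_closed[OF F]] expansion_A_eq[OF IH(2) functionals_closed[OF F]]
        expansion_D_eq[OF IH(3) functionals_closed[OF F]] W unwantedD_Cons_0 unwantedD_Cons_Suc
        sum_distrib_left sum.distrib algebra_simps)
  finally show "F (D x (foldr B (y # ys) v0))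
      = LD x * (\<Prod>k<length (y # ys). coefD g x ((y # ys)!k)) * F (foldr B (y # ys) v0)
      + (\<Sum>k<length (y # ys). unwantedD g LA LD x (y # ys) k * F (B x (foldr B (del_at k (y # ys)) v0)))"
    unfolding prod_lessThan_Cons sum_lessThan_length_Cons B_string_Cons_terms(3)[OF F] by (simp add: W_def)
qed

theorem expansion_on_B_string:
  assumes "\<forall>k<length ys. generic_pair g x (ys!k)"
    and "\<forall>j<length ys. \<forall>k<length ys. j \<noteq> k \<longrightarrow> generic_pair g (ys!j) (ys!k)"
    and "fa g (2*x) \<noteq> 0"
  shows "expansion_A x ys \<and> expansion_D x ys"
  using assms
proof (induction ys arbitrary: x)
  case Nil
  then show ?case by (simp add: expansion_A_def expansion_D_def A_vacuum D_vacuum)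
next
  case (Cons y ys)
  then have "generic_pair g x y" "\<forall>k<length ys. generic_pair g x (ys!k)"
    "\<forall>k<length ys. generic_pair g y (ys!k)"
    "\<forall>j<length ys. \<forall>k<length ys. j \<noteq> k \<longrightarrow> generic_pair g (ys!j) (ys!k)"
    by fastforce+
  moreover from this have "fa g (2*y) \<noteq> 0" unfolding generic_pair_def by simp
  ultimately show ?case
    using Cons.IH Cons.prems(3) by (simp add: expansion_A_Cons expansion_D_Cons)
qed

end

section \<open>Scalar products\<close>

text \<open>Dual vectors of \<open>V\<^sub>Q\<close>: linear functionals on \<open>qvec\<close> that only depend on the states
  of length \<open>L\<close>.\<close>

definition local_functional :: "nat \<Rightarrow> (qvec \<Rightarrow> complex) set" where
  "local_functional L = {F. (\<forall>w1 w2. (\<forall>s. length s = L \<longrightarrow> w1 s = w2 s) \<longrightarrow> F w1 = F w2)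
                           \<and> (\<forall>a b w1 w2. F (\<lambda>s. a * w1 s + b * w2 s) = a * F w1 + b * F w2)}"

lemma local_functional_linear:
  assumes "F \<in> local_functional L"
  shows "F (\<lambda>s. a * w1 s + b * w2 s) = a * F w1 + b * F w2"
  using assms unfolding local_functional_def by blast

lemma local_functional_combination:
  assumes F: "F \<in> local_functional L" and w: "\<And>s. length s = L \<Longrightarrow> w s = a * w1 s + b * w2 s + c * w3 s"
  shows "F w = a * F w1 + b * F w2 + c * F w3"
proof -
  have "F w = F (\<lambda>s. 1 * (\<lambda>s. a * w1 s + b * w2 s) s + c * w3 s)"
    using F w unfolding local_functional_def by simp
  also have "\<dots> = 1 * F (\<lambda>s. a * w1 s + b * w2 s) + c * F w3"
    by (rule local_functional_linear[OF F])
  also have "F (\<lambda>s. a * w1 s + b * w2 s) = a * F w1 + b * F w2"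
    by (rule local_functional_linear[OF F])
  finally show ?thesis by simp
qed

lemma local_functional_local:
  "F \<in> local_functional L \<Longrightarrow> (\<And>s. length s = L \<Longrightarrow> w1 s = w2 s) \<Longrightarrow> F w1 = F w2"
  unfolding local_functional_def by blast

lemma local_functional_precomp:
  assumes F: "F \<in> local_functional L"
    and local: "\<And>w1 w2 s. (\<And>s. length s = L \<Longrightarrow> w1 s = w2 s) \<Longrightarrow> length s = L \<Longrightarrow> X w1 s = X w2 s"
    and linear: "\<And>a b w1 w2. X (\<lambda>s. a * w1 s + b * w2 s) = (\<lambda>s. a * X w1 s + b * X w2 s)"
  shows "(\<lambda>v. F (X v)) \<in> local_functional L"
  unfolding local_functional_def
proof safe
  fix w1 w2 :: qvec assume "\<forall>s. length s = L \<longrightarrow> w1 s = w2 s"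
  then show "F (X w1) = F (X w2)" by (intro local_functional_local[OF F] local) auto
next
  fix a b and w1 w2 :: qvec
  show "F (X (\<lambda>s. a * w1 s + b * w2 s)) = a * F (X w1) + b * F (X w2)"
    unfolding linear by (rule local_functional_linear[OF F])
qed

lemma local_functional_Top:
  "F \<in> local_functional (length mu) \<Longrightarrow> (\<lambda>v. F (Top g h mu i j y v)) \<in> local_functional (length mu)"
  by (rule local_functional_precomp) (auto intro: Top_local simp: Top_linear)

lemma offshell_action_right:
  "offshell_action g (Aop g h mu) (Dtilde g h mu) (Bop g h mu) (LambdaA g h mu) (LambdaDt g h mu)
     (vac (length mu)) UNIV (local_functional (length mu))"
  unfolding Aop_def Bop_def
proof unfold_locales
  fix F y assume "F \<in> local_functional (length mu)"
  then show "(\<lambda>v. F (TB g h mu y v)) \<in> local_functional (length mu)" by (rule local_functional_Top)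
next
  fix F v x y assume F: "F \<in> local_functional (length mu)" and "generic_pair g x y"
  then show "F (TA g h mu x (TB g h mu y v)) = coefA g x y * F (TB g h mu y (TA g h mu x v))
      + coefAA g x y * F (TB g h mu x (TA g h mu y v)) + coefAD g x y * F (TB g h mu x (Dtilde g h mu y v))"
    by (intro local_functional_combination[OF F] exchange_AB) simp_all
next
  fix F v x y assume F: "F \<in> local_functional (length mu)" and "generic_pair g x y"
  then show "F (Dtilde g h mu x (TB g h mu y v)) = coefD g x y * F (TB g h mu y (Dtilde g h mu x v))
      + coefDD g x y * F (TB g h mu x (Dtilde g h mu y v)) + coefDA g x y * F (TB g h mu x (TA g h mu y v))"
    by (intro local_functional_combination[OF F] exchange_DB) simp_all
next
  fix F v x y assume "F \<in> local_functional (length mu)"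
  then show "F (TB g h mu x (TB g h mu y v)) = F (TB g h mu y (TB g h mu x v))"
    by (rule local_functional_local) (rule B_commute, simp)
next
  fix F x assume "F \<in> local_functional (length mu)"
  then show "F (TA g h mu x (vac (length mu))) = LambdaA g h mu x * F (vac (length mu))"
    using local_functional_combination[of F _ _ "LambdaA g h mu x" "vac (length mu)" 0 _ 0]
    by (simp add: A_vac)
next
  fix F x assume "F \<in> local_functional (length mu)" "fa g (2*x) \<noteq> 0"
  then show "F (Dtilde g h mu x (vac (length mu))) = LambdaDt g h mu x * F (vac (length mu))"
    using local_functional_combination[of F _ _ "LambdaDt g h mu x" "vac (length mu)" 0 _ 0]
    by (simp add: Dtilde_vac)
qed simp_all

text \<open>To the left the same algebra acts on dual vectors \<open>\<phi>\<close>, an operator \<open>X\<close> acting as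
  \<open>\<phi> \<mapsto> \<phi> \<circ> X\<close>; the relations are tested on all evaluations \<open>\<phi> \<mapsto> \<phi> w\<close>.\<close>

lemma offshell_action_left:
  "offshell_action g (\<lambda>x \<phi> w. \<phi> (Aop g h mu x w)) (\<lambda>x \<phi> w. \<phi> (Dtilde g h mu x w))
     (\<lambda>y \<phi> w. \<phi> (Cop g h mu y w)) (LambdaA g h mu) (LambdaDt g h mu)
     (\<lambda>w. w (replicate (length mu) 0)) (local_functional (length mu)) {F. \<exists>w. F = (\<lambda>\<phi>. \<phi> w)}"
  unfolding Aop_def Cop_def
proof unfold_locales
  show "(\<lambda>w. w (replicate (length mu) 0)) \<in> local_functional (length mu)"
    unfolding local_functional_def by simp
next
  fix v y assume "v \<in> local_functional (length mu)"
  then show "(\<lambda>w. v (TC g h mu y w)) \<in> local_functional (length mu)" by (rule local_functional_Top)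
next
  fix F :: "(qvec \<Rightarrow> complex) \<Rightarrow> complex" and y
  assume "F \<in> {F. \<exists>w. F = (\<lambda>\<phi>. \<phi> w)}"
  then show "(\<lambda>v. F (\<lambda>w. v (TC g h mu y w))) \<in> {F. \<exists>w. F = (\<lambda>\<phi>. \<phi> w)}" by auto
next
  fix F :: "(qvec \<Rightarrow> complex) \<Rightarrow> complex" and v x y
  assume "F \<in> {F. \<exists>w. F = (\<lambda>\<phi>. \<phi> w)}" and v: "v \<in> local_functional (length mu)"
    and gen: "generic_pair g x y"
  then show "F (\<lambda>w. v (TC g h mu y (TA g h mu x w)))
     = coefA g x y * F (\<lambda>w. v (TA g h mu x (TC g h mu y w)))
       + coefAA g x y * F (\<lambda>w. v (TA g h mu y (TC g h mu x w)))
       + coefAD g x y * F (\<lambda>w. v (Dtilde g h mu y (TC g h mu x w)))"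
    by (auto intro!: local_functional_combination[OF v] exchange_CA[OF gen] simp del: One_nat_def)
next
  fix F :: "(qvec \<Rightarrow> complex) \<Rightarrow> complex" and v x y
  assume "F \<in> {F. \<exists>w. F = (\<lambda>\<phi>. \<phi> w)}" and v: "v \<in> local_functional (length mu)"
    and gen: "generic_pair g x y"
  then show "F (\<lambda>w. v (TC g h mu y (Dtilde g h mu x w)))
     = coefD g x y * F (\<lambda>w. v (Dtilde g h mu x (TC g h mu y w)))
       + coefDD g x y * F (\<lambda>w. v (Dtilde g h mu y (TC g h mu x w)))
       + coefDA g x y * F (\<lambda>w. v (TA g h mu y (TC g h mu x w)))"
    by (auto intro!: local_functional_combination[OF v] exchange_CD[OF gen] simp del: One_nat_def)
next
  fix F :: "(qvec \<Rightarrow> complex) \<Rightarrow> complex" and v x y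
  assume "F \<in> {F. \<exists>w. F = (\<lambda>\<phi>. \<phi> w)}" and v: "v \<in> local_functional (length mu)"
  then show "F (\<lambda>w. v (TC g h mu y (TC g h mu x w))) = F (\<lambda>w. v (TC g h mu x (TC g h mu y w)))"
    by (auto intro!: local_functional_local[OF v] C_commute simp del: One_nat_def)
qed (auto simp: vac_A vac_Dtilde)

lemma fold_Cop_eq_foldr:
  "fold (Cop g h mu) xs v z = foldr (\<lambda>y \<phi> w. \<phi> (Cop g h mu y w)) xs (\<lambda>w. w z) v"
  by (induction xs arbitrary: v) auto

lemma NC_eq_uminus_NB: "NC g h mu l0 zs k = - NB g h mu l0 zs k"
  by (simp add: NC_def NB_def Let_def)

lemma NB_eq_unwantedD: "NB g h mu l0 ys k = unwantedD g (LambdaA g h mu) (LambdaDt g h mu) l0 ys k"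
proof -
  have "(\<Prod>j\<in>{..<length ys} - {k}. fa g (ys ! j - ys ! k) / fb (ys ! j - ys ! k) * (fb (ys ! j + ys ! k) / fa g (ys ! j + ys ! k)))
     = (\<Prod>j\<in>{..<length ys} - {k}. coefA g (ys ! k) (ys ! j))"
    and "(\<Prod>j\<in>{..<length ys} - {k}. fa g (ys ! k - ys ! j) / fb (ys ! k - ys ! j) * (fa g (ys ! k + ys ! j + g) / fb (ys ! k + ys ! j + g)))
     = (\<Prod>j\<in>{..<length ys} - {k}. coefD g (ys ! k) (ys ! j))"
    by (rule prod.cong; simp add: coefA_def coefD_def add.commute)+
  then show ?thesis
    unfolding NB_def unwantedD_def Let_def coefDD_def coefDA_def by (simp add: algebra_simps)
qed

lemma M0_eq: "M0 g h mu l0 xs ys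
    = LambdaDt g h mu l0 * ((\<Prod>k<length ys. coefD g l0 (ys!k)) - (\<Prod>k<length xs. coefD g l0 (xs!k)))"
  unfolding M0_def coefD_def by simp

lemma Sn_Dtilde_right:
  assumes "\<forall>k<length ys. generic_pair g x (ys!k)"
    and "\<forall>j<length ys. \<forall>k<length ys. j \<noteq> k \<longrightarrow> generic_pair g (ys!j) (ys!k)"
    and "fa g (2*x) \<noteq> 0"
  shows "fold (Cop g h mu) xs (Dtilde g h mu x (foldr (Bop g h mu) ys (vac (length mu)))) (replicate (length mu) 0)
     = LambdaDt g h mu x * (\<Prod>k<length ys. coefD g x (ys!k)) * Sn g h mu xs ys
       + (\<Sum>k<length ys. unwantedD g (LambdaA g h mu) (LambdaDt g h mu) x ys k * Sn g h mu xs (x # del_at k ys))"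
proof -
  interpret R: offshell_action g "Aop g h mu" "Dtilde g h mu" "Bop g h mu" "LambdaA g h mu" "LambdaDt g h mu"
    "vac (length mu)" UNIV "local_functional (length mu)"
    by (rule offshell_action_right)
  interpret L: offshell_action g "\<lambda>x \<phi> w. \<phi> (Aop g h mu x w)" "\<lambda>x \<phi> w. \<phi> (Dtilde g h mu x w)"
    "\<lambda>y \<phi> w. \<phi> (Cop g h mu y w)" "LambdaA g h mu" "LambdaDt g h mu" "\<lambda>w. w (replicate (length mu) 0)"
    "local_functional (length mu)" "{F. \<exists>w. F = (\<lambda>\<phi>. \<phi> w)}"
    by (rule offshell_action_left)
  have "(\<lambda>w. fold (Cop g h mu) xs w (replicate (length mu) 0)) \<in> local_functional (length mu)"
    using L.foldr_B_in[of xs] by (simp add: fold_Cop_eq_foldr)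
  from R.expansion_D_eq[OF conjunct2[OF R.expansion_on_B_string[OF assms]] this] show ?thesis
    by (simp add: Sn_def)
qed

lemma Sn_Dtilde_left:
  assumes "\<forall>k<length xs. generic_pair g x (xs!k)"
    and "\<forall>j<length xs. \<forall>k<length xs. j \<noteq> k \<longrightarrow> generic_pair g (xs!j) (xs!k)"
    and "fa g (2*x) \<noteq> 0"
  shows "fold (Cop g h mu) xs (Dtilde g h mu x (foldr (Bop g h mu) ys (vac (length mu)))) (replicate (length mu) 0)
     = LambdaDt g h mu x * (\<Prod>k<length xs. coefD g x (xs!k)) * Sn g h mu xs ys
       + (\<Sum>k<length xs. unwantedD g (LambdaA g h mu) (LambdaDt g h mu) x xs k * Sn g h mu (x # del_at k xs) ys)"
proof -
  interpret L: offshell_action g "\<lambda>x \<phi> w. \<phi> (Aop g h mu x w)" "\<lambda>x \<phi> w. \<phi> (Dtilde g h mu x w)"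
    "\<lambda>y \<phi> w. \<phi> (Cop g h mu y w)" "LambdaA g h mu" "LambdaDt g h mu" "\<lambda>w. w (replicate (length mu) 0)"
    "local_functional (length mu)" "{F. \<exists>w. F = (\<lambda>\<phi>. \<phi> w)}"
    by (rule offshell_action_left)
  have "(\<lambda>\<phi>. \<phi> (foldr (Bop g h mu) ys (vac (length mu)))) \<in> {F. \<exists>w. F = (\<lambda>\<phi>. \<phi> w)}"
    by blast
  from L.expansion_D_eq[OF conjunct2[OF L.expansion_on_B_string[OF assms]] this] show ?thesis
    by (simp add: Sn_def fold_Cop_eq_foldr)
qed

theorem theorem2:
  fixes \<gamma> h l0 :: complex and mu xs ys :: "complex list" and n :: nat
  assumes "length mu \<ge> 1"
    and "n \<ge> 1" and "length xs = n" and "length ys = n"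
    and "fa \<gamma> (2 * l0) \<noteq> 0" and "fb (2 * l0 + \<gamma>) \<noteq> 0"
    and "\<forall>x\<in>set xs \<union> set ys. fb (l0 - x) \<noteq> 0 \<and> fb (l0 + x + \<gamma>) \<noteq> 0
            \<and> fa \<gamma> (2 * x) \<noteq> 0 \<and> fa \<gamma> (l0 + x) \<noteq> 0"
    and "\<forall>j<n. \<forall>k<n. j \<noteq> k \<longrightarrow> fb (xs ! j - xs ! k) \<noteq> 0 \<and> fa \<gamma> (xs ! j + xs ! k) \<noteq> 0
            \<and> fb (xs ! j + xs ! k + \<gamma>) \<noteq> 0"
    and "\<forall>j<n. \<forall>k<n. j \<noteq> k \<longrightarrow> fb (ys ! j - ys ! k) \<noteq> 0 \<and> fa \<gamma> (ys ! j + ys ! k) \<noteq> 0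
            \<and> fb (ys ! j + ys ! k + \<gamma>) \<noteq> 0"
  shows "M0 \<gamma> h mu l0 xs ys * Sn \<gamma> h mu xs ys
         + (\<Sum>k<n. NC \<gamma> h mu l0 xs k * Sn \<gamma> h mu (l0 # del_at k xs) ys)
         + (\<Sum>k<n. NB \<gamma> h mu l0 ys k * Sn \<gamma> h mu xs (l0 # del_at k ys)) = 0"
proof -
  have "\<forall>k<length xs. generic_pair \<gamma> l0 (xs!k)" "\<forall>k<length ys. generic_pair \<gamma> l0 (ys!k)"
    using assms(3-5,7) unfolding generic_pair_def by (auto simp: fa_def)
  moreover have "\<forall>j<length xs. \<forall>k<length xs. j \<noteq> k \<longrightarrow> generic_pair \<gamma> (xs!j) (xs!k)"
    "\<forall>j<length ys. \<forall>k<length ys. j \<noteq> k \<longrightarrow> generic_pair \<gamma> (ys!j) (ys!k)"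
    using assms(3,4,7-9) unfolding generic_pair_def by auto
  ultimately show ?thesis
    using Sn_Dtilde_right[of ys \<gamma> l0 h mu xs] Sn_Dtilde_left[of xs \<gamma> l0 h mu ys] assms(3-5)
    by (simp add: M0_eq NC_eq_uminus_NB NB_eq_unwantedD algebra_simps sum_negf)
qed

end
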